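(* Let $r$ be a positive integer and $n$ a nonnegative integer. Then \begin{multline*} {_{2r+6}\omega_{2r+5}} (ab;c,ab/c,bq,bq^2,\dots,bq^r,aq^n,aq^{n+1},\dots,aq^{n+r-1},q^{-rn};q^r,p) \\ =\frac{(a/c,c/b;q,p)_n\,(q^r,abq^r;q^r,p)_n} {(cq^r,abq^r/c;q^r,p)_n\,(a,1/b;q,p)_n}. \end{multline*}
   Context: Let $p$ be a complex number with $|p|<1$, $q$ a nonzero complex number, and all parameters generic so that no denominator vanishes. For nonzero $x$, $E(x)=E(x;p)=\prod_{k\ge 0}(1-xp^k)(1-p^{k+1}/x)$. For a nonzero base $Q$ and integer $m$, $(a;Q,p)_m=\prod_{k=0}^{m-1}E(aQ^k)$ if $m>0$, $=1$ if $m=0$, and $=1/\prod_{k=0}^{-m-1}E(aQ^{m+k})$ if $m<0$; $(a_1,\dots,a_s;Q,p)_m=\prod_{i=1}^s(a_i;Q,p)_m$. For parameters with $(a_4\cdots a_{r+1})^2=a_1^{r-3}Q^{r-5}$ and one of $a_4,\dots,a_{r+1}$ of the form $Q^{-N}$ ($N$ a nonnegative integer), \[{_{r+1}\omega_r}(a_1;a_4,\dots,a_{r+1};Q,p)=\sum_{k\ge 0}\frac{E(a_1Q^{2k})}{E(a_1)}\frac{(a_1,a_4,\dots,a_{r+1};Q,p)_k\,Q^k}{(Q,a_1Q/a_4,\dots,a_1Q/a_{r+1};Q,p)_k}\] (a terminating sum). *)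

theory Defs
  imports "HOL-Analysis.Analysis"
begin

definition ellE :: "complex \<Rightarrow> complex \<Rightarrow> complex" where
  "ellE x p = (\<Prod>k. (1 - x * p ^ k) * (1 - p ^ (k + 1) / x))"

definition efac :: "complex \<Rightarrow> complex \<Rightarrow> complex \<Rightarrow> int \<Rightarrow> complex" where
  "efac a Q p m =
     (if m > 0 then (\<Prod>k<nat m. ellE (a * Q ^ k) p)
      else if m = 0 then 1
      else 1 / (\<Prod>k<nat (- m). ellE (a * Q powi (m + int k)) p))"

text \<open>The (terminating) very-well-poised elliptic series
  _{r+1}omega_r(a1; a4,...,a_{r+1}; Q, p), parameters a4..a_{r+1} given as a list.\<close>
definition omega :: "complex \<Rightarrow> complex list \<Rightarrow> complex \<Rightarrow> complex \<Rightarrow> complex" where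
  "omega a1 as Q p =
     (\<Sum>k. ellE (a1 * Q ^ (2 * k)) p / ellE a1 p *
        (efac a1 Q p (int k) * (\<Prod>a\<leftarrow>as. efac a Q p (int k)) * Q ^ k) /
        (efac Q Q p (int k) * (\<Prod>a\<leftarrow>as. efac (a1 * Q / a) Q p (int k))))"

end

theory Submission
  imports Defs "HOL-Complex_Analysis.Complex_Analysis"
begin

text \<open>
  Write \<open>A = a b\<close> and \<open>Q = q\<^sup>r\<close>. The series terminates at \<open>k = n\<close>, and its \<open>k\<close>-th term is,
  up to a factor independent of \<open>k\<close>, the \<open>k\<close>-th coefficient of the Lagrange interpolation of
  \<open>c \<mapsto> \<Prod>i<n. E(c q\<^sup>i/b) E(a q\<^sup>i/c)\<close> in the basis of theta functions
  \<open>\<Prod>j\<noteq>k. E(c Q\<^sup>j) E(A Q\<^sup>j/c)\<close> (\<open>k \<le> n\<close>), so the sum is that interpolation formula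
  evaluated at \<open>c\<close>. The interpolation rests on the three-term addition formula for \<open>E\<close>, which
  follows from Liouville's theorem for \<open>p\<close>-periodic functions on \<open>\<complex>\<^sup>*\<close>. The genericity that keeps
  the interpolation nodes apart is removed by continuity in \<open>a\<close>.
\<close>

section \<open>The product expansion of \<open>E\<close>\<close>

definition qpoch_inf :: "complex \<Rightarrow> complex \<Rightarrow> complex" where
  "qpoch_inf p c = (\<Prod>k. 1 - c * p ^ k)"

lemma norm_power_Suc_less_one:
  fixes p :: complex
  assumes "norm p < 1"
  shows "norm (p ^ Suc k) < 1"
  using assms by (simp add: norm_power power_less_one_iff del: power_Suc)

lemma qpoch_inf_has_prod:
  assumes "norm p < 1"
  shows "(\<lambda>k. 1 - c * p ^ k) has_prod qpoch_inf p c"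
proof -
  have "summable (\<lambda>k. norm ((1 - c * p ^ k) - 1))"
    using assms by (simp add: norm_mult norm_power summable_mult)
  hence "convergent_prod (\<lambda>k. 1 - c * p ^ k)"
    by (intro abs_convergent_prod_imp_convergent_prod summable_imp_abs_convergent_prod)
  thus ?thesis
    unfolding qpoch_inf_def by (rule convergent_prod_has_prod)
qed

lemma qpoch_inf_rec:
  assumes "norm p < 1"
  shows "qpoch_inf p c = (1 - c) * qpoch_inf p (c * p)"
proof -
  have "(\<lambda>k. 1 - c * p ^ Suc k) has_prod qpoch_inf p (c * p)"
    using qpoch_inf_has_prod[OF assms, of "c * p"] by (simp add: mult_ac)
  hence "(\<lambda>k. 1 - c * p ^ k) has_prod (qpoch_inf p (c * p) * (1 - c * p ^ 0))"
    by (rule has_prod_Suc_imp)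
  thus ?thesis
    using qpoch_inf_has_prod[OF assms, of c] has_prod_unique2 by (simp add: mult.commute)
qed

lemma qpoch_inf_eq_0_iff:
  assumes "norm p < 1"
  shows "qpoch_inf p c = 0 \<longleftrightarrow> (\<exists>k. c * p ^ k = 1)"
  using has_prod_eq_0_iff[OF qpoch_inf_has_prod[OF assms, of c]] by (auto simp: image_iff)

lemma qpoch_inf_self_nonzero:
  assumes "norm p < 1"
  shows "qpoch_inf p p \<noteq> 0"
proof -
  have "p * p ^ k \<noteq> 1" for k
    using norm_power_Suc_less_one[OF assms, of k] by auto
  thus ?thesis
    by (simp add: qpoch_inf_eq_0_iff[OF assms])
qed

lemma qpoch_inf_zero [simp]: "qpoch_inf p 0 = 1"
  by (simp add: qpoch_inf_def)

lemma ellE_qpoch_inf: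
  assumes "norm p < 1"
  shows "ellE x p = qpoch_inf p x * qpoch_inf p (p / x)"
proof -
  have "(\<lambda>k. (1 - x * p ^ k) * (1 - p / x * p ^ k)) has_prod (qpoch_inf p x * qpoch_inf p (p / x))"
    by (intro has_prod_mult qpoch_inf_has_prod assms)
  moreover have "(\<lambda>k. (1 - x * p ^ k) * (1 - p / x * p ^ k))
      = (\<lambda>k. (1 - x * p ^ k) * (1 - p ^ (k + 1) / x))"
    by (simp add: mult.commute)
  ultimately show ?thesis
    unfolding ellE_def by (metis has_prod_unique)
qed

lemma ellE_eq_one_minus_mult:
  assumes "norm p < 1"
  shows "ellE x p = (1 - x) * (qpoch_inf p (x * p) * qpoch_inf p (p / x))"
  using ellE_qpoch_inf[OF assms] qpoch_inf_rec[OF assms, of x] by simp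

lemma ellE_one:
  assumes "norm p < 1"
  shows "ellE 1 p = 0"
  using ellE_eq_one_minus_mult[OF assms] by simp

lemma ellE_nome_zero: "ellE x 0 = 1 - x"
  using ellE_eq_one_minus_mult[of 0 x] by simp

lemma ellE_inverse:
  assumes "norm p < 1" "x \<noteq> 0"
  shows "ellE (1 / x) p = - ellE x p / x"
proof -
  define P where "P = qpoch_inf p (p * x) * qpoch_inf p (p / x)"
  have "ellE (1 / x) p = (1 - 1 / x) * P"
    using ellE_eq_one_minus_mult[OF assms(1), of "1 / x"] by (simp add: P_def mult.commute)
  also have "\<dots> = - ((1 - x) * P) / x"
    using assms(2) by (simp add: field_simps)
  also have "(1 - x) * P = ellE x p"
    using ellE_eq_one_minus_mult[OF assms(1), of x] by (simp add: P_def mult.commute)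
  finally show ?thesis .
qed

lemma ellE_mult_nome:
  assumes "norm p < 1" "x \<noteq> 0" "p \<noteq> 0"
  shows "ellE (p * x) p = - ellE x p / x"
proof -
  have "ellE (p * x) p = ellE (1 / x) p"
    using ellE_qpoch_inf[OF assms(1), of "p * x"] ellE_qpoch_inf[OF assms(1), of "1 / x"] assms
    by (simp add: mult.commute)
  thus ?thesis
    using ellE_inverse[OF assms(1,2)] by simp
qed

lemma ellE_divide_commute:
  assumes "norm p < 1" "x \<noteq> 0" "y \<noteq> 0"
  shows "ellE (x / y) p = - (x / y) * ellE (y / x) p"
  using ellE_inverse[OF assms(1), of "y / x"] assms by (simp add: field_simps)

lemma ellE_eq_0_iff:
  assumes "norm p < 1" "x \<noteq> 0"
  shows "ellE x p = 0 \<longleftrightarrow> (\<exists>k. x * p ^ k = 1) \<or> (\<exists>k. x = p ^ Suc k)"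
  using assms by (auto simp: ellE_qpoch_inf qpoch_inf_eq_0_iff field_simps)

lemma ellE_eq_0_imp_powi:
  assumes "norm p < 1" "x \<noteq> 0" "ellE x p = 0"
  shows "\<exists>m. x = p powi m"
  using assms(3) unfolding ellE_eq_0_iff[OF assms(1,2)]
proof (elim disjE exE)
  fix k assume k: "x * p ^ k = 1"
  hence "p ^ k \<noteq> 0"
    by (metis mult_zero_right zero_neq_one)
  hence "x = p powi (- int k)"
    using k by (simp add: power_int_minus field_simps)
  thus ?thesis ..
next
  fix k assume "x = p ^ Suc k"
  hence "x = p powi int (Suc k)"
    by (simp only: power_int_of_nat)
  thus ?thesis ..
qed

lemma ellE_minus_one_nonzero:
  assumes "norm p < 1"
  shows "ellE (- 1) p \<noteq> 0"
proof
  assume "ellE (- 1) p = 0"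
  hence "\<exists>k. p ^ k = - 1"
    unfolding ellE_eq_0_iff[OF assms, of "- 1", simplified]
    by (metis power_Suc minus_equation_iff)
  then obtain k where k: "p ^ k = - 1" ..
  show False
  proof (cases k)
    case 0
    with k show False by simp
  next
    case (Suc j)
    with k norm_power_Suc_less_one[OF assms, of j] show False by simp
  qed
qed

lemma holomorphic_on_qpoch_inf_ball:
  assumes "norm p < 1"
  shows "qpoch_inf p holomorphic_on ball z 1"
proof -
  define R where "R = norm z + 1"
  have norm_le: "norm c \<le> R" if "c \<in> cball z 1" for c
    using that norm_triangle_sub[of c z] by (auto simp: R_def dist_norm norm_minus_commute)
  have "uniformly_convergent_on (cball z 1) (\<lambda>N c. \<Prod>k<N. 1 + (- c * p ^ k))"
  proof (rule uniformly_convergent_on_prod)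
    show "uniformly_convergent_on (cball z 1) (\<lambda>N c. \<Sum>k<N. norm (- c * p ^ k))"
    proof (rule Weierstrass_m_test'[where M = "\<lambda>k. R * norm p ^ k"])
      show "norm (norm (- c * p ^ k)) \<le> R * norm p ^ k" if "c \<in> cball z 1" for k c
        using norm_le[OF that] by (simp add: norm_mult norm_power mult_right_mono)
      show "summable (\<lambda>k. R * norm p ^ k)"
        using assms by (simp add: summable_mult)
    qed
  qed (simp | intro continuous_intros)+
  moreover have "lim (\<lambda>N. \<Prod>k<N. 1 + (- c * p ^ k)) = qpoch_inf p c" for c
    using has_prod_imp_tendsto'[OF qpoch_inf_has_prod[OF assms, of c]] by (simp add: limI)
  ultimately have "uniform_limit (cball z 1) (\<lambda>N c. \<Prod>k<N. 1 - c * p ^ k) (qpoch_inf p) sequentially"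
    by (simp add: uniformly_convergent_uniform_limit_iff)
  thus ?thesis
    by (rule holomorphic_uniform_limit[rotated])
       (simp | intro always_eventually allI conjI continuous_intros holomorphic_intros)+
qed

lemma analytic_on_qpoch_inf [analytic_intros]:
  assumes "norm p < 1" "f analytic_on S"
  shows "(\<lambda>x. qpoch_inf p (f x)) analytic_on S"
proof -
  have "qpoch_inf p analytic_on UNIV"
    using holomorphic_on_qpoch_inf_ball[OF assms(1)] unfolding analytic_on_def
    by (meson zero_less_one)
  thus ?thesis
    using analytic_on_compose[OF assms(2) analytic_on_subset[OF _ subset_UNIV]] by (simp add: o_def)
qed

lemma analytic_on_ellE [analytic_intros]:
  assumes "norm p < 1" "f analytic_on S" "\<And>x. x \<in> S \<Longrightarrow> f x \<noteq> 0"
  shows "(\<lambda>x. ellE (f x) p) analytic_on S"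
  unfolding ellE_qpoch_inf[OF assms(1)] using assms by (intro analytic_intros) auto

lemma isCont_ellE [continuous_intros]:
  assumes "norm p < 1" "isCont f a" "f a \<noteq> 0"
  shows "isCont (\<lambda>z. ellE (f z) p) a"
proof -
  have "(\<lambda>x. ellE x p) analytic_on {f a}"
    using assms by (intro analytic_intros) auto
  thus ?thesis
    using isCont_o2[OF assms(2) analytic_at_imp_isCont] by blast
qed

lemma eventually_nonzero_holomorphic:
  fixes f :: "complex \<Rightarrow> complex"
  assumes "f holomorphic_on - {0}" "\<beta> \<noteq> 0" "f \<beta> \<noteq> 0" "z \<noteq> 0"
  shows "\<forall>\<^sub>F w in at z. f w \<noteq> 0"
proof (cases "f z = 0")
  case True
  have "connected (- {0::complex})"
    by (rule connected_punctured_universe) simp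
  then obtain r where "0 < r" "\<And>w. w \<in> ball z r - {z} \<Longrightarrow> f w \<noteq> 0"
    using isolated_zeros[OF assms(1) _ _ _ True, of \<beta>] assms by auto
  thus ?thesis
    unfolding eventually_at by (intro exI[of _ r]) (auto simp: dist_commute)
next
  case False
  have "isCont f z"
    using assms by (intro analytic_at_imp_isCont holomorphic_on_imp_analytic_at[OF assms(1)]) auto
  thus ?thesis
    using False by (simp add: isCont_def tendsto_imp_eventually_ne)
qed

lemma eventually_ellE_nonzero:
  assumes "norm p < 1" "f analytic_on - {0}" "\<And>z. z \<noteq> 0 \<Longrightarrow> f z \<noteq> 0"
    and "\<beta> \<noteq> 0" "f \<beta> = - 1" "z \<noteq> 0"
  shows "\<forall>\<^sub>F w in at z. ellE (f w) p \<noteq> 0"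
proof (rule eventually_nonzero_holomorphic)
  show "(\<lambda>w. ellE (f w) p) holomorphic_on - {0}"
    using assms by (intro analytic_imp_holomorphic analytic_intros) auto
qed (use assms ellE_minus_one_nonzero in auto)

section \<open>Multiplicatively periodic functions\<close>

lemma powi_periodic:
  fixes G :: "complex \<Rightarrow> 'a"
  assumes per: "\<And>w. w \<noteq> 0 \<Longrightarrow> G (p * w) = G w" and "p \<noteq> 0" "w \<noteq> 0"
  shows "G (p powi m * w) = G w"
proof (induction m rule: int_induct[where k = 0])
  case (step1 i)
  have "G (p powi (i + 1) * w) = G (p * (p powi i * w))"
    using assms(2) by (simp add: power_int_add_1' mult.assoc)
  also have "\<dots> = G w"
    using per[of "p powi i * w"] assms step1 by simp
  finally show ?case .
next
  case (step2 i)
  have "G (p powi (i - 1) * w) = G (p * (p powi (i - 1) * w))"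
    using per[of "p powi (i - 1) * w"] assms by simp
  also have "p * (p powi (i - 1) * w) = p powi i * w"
    using assms(2) power_int_add_1'[of p "i - 1"] by (simp add: mult.assoc)
  finally show ?case
    using step2 by simp
qed simp

lemma powi_mult_in_annulus:
  fixes p x :: complex
  assumes "norm p < 1" "p \<noteq> 0" "x \<noteq> 0"
  shows "\<exists>m. norm p \<le> norm (p powi m * x) \<and> norm (p powi m * x) \<le> 1"
proof -
  define L where "L = - ln (norm p)"
  have L: "L > 0" "exp (- L) = norm p"
    using assms by (auto simp: L_def)
  define m where "m = \<lceil>ln (norm x) / L\<rceil>"
  have m: "ln (norm x) / L \<le> m" "m - 1 < ln (norm x) / L"
    unfolding m_def by linarith+
  have norm_eq: "norm (p powi k * x) = exp (ln (norm x) - k * L)" for k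
  proof -
    have "norm (p powi k * x) = exp (k * ln (norm p)) * exp (ln (norm x))"
      using assms by (simp add: norm_mult norm_power_int powr_real_of_int'[symmetric] powr_def)
    thus ?thesis
      by (simp add: L_def exp_add[symmetric] algebra_simps)
  qed
  have "ln (norm x) - m * L \<le> 0" "- L < ln (norm x) - m * L"
    using m L(1) by (simp_all add: field_simps)
  hence "norm (p powi m * x) \<le> 1" "exp (- L) \<le> norm (p powi m * x)"
    unfolding norm_eq by simp_all
  thus ?thesis
    using L(2) by auto
qed

lemma filterlim_divide_at:
  fixes c x :: complex
  assumes "c \<noteq> 0"
  shows "filterlim (\<lambda>w. w / c) (at x) (at (c * x))"
proof (rule filterlim_atI)
  show "((\<lambda>w. w / c) \<longlongrightarrow> x) (at (c * x))"
    using assms by (auto intro!: tendsto_eq_intros)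
  show "\<forall>\<^sub>F w in at (c * x). w / c \<noteq> x"
    using eventually_neq_at_within[of "c * x" "c * x"] by eventually_elim (use assms in auto)
qed

lemma remove_sings_local_representative:
  assumes "g analytic_on {x}" "\<forall>\<^sub>F w in at x. G w = g w"
  shows "G \<midarrow>x\<rightarrow> remove_sings G x" "remove_sings G analytic_on {x}"
proof -
  have "g \<midarrow>x\<rightarrow> g x"
    using assms(1) analytic_at_imp_isCont isCont_def by blast
  hence lim: "G \<midarrow>x\<rightarrow> g x"
    by (rule Lim_transform_eventually) (use assms(2) in \<open>auto elim: eventually_mono\<close>)
  thus "G \<midarrow>x\<rightarrow> remove_sings G x"
    using remove_sings_eqI by auto
  have "isolated_singularity_at G x"
    using isolated_singularity_at_cong[OF assms(2) refl]
      isolated_singularity_at_analytic[OF assms(1)]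
    by simp
  thus "remove_sings G analytic_on {x}"
    using remove_sings_analytic_at lim by blast
qed

lemma periodic_local_representative:
  fixes G g :: "complex \<Rightarrow> complex"
  assumes "p \<noteq> 0" and per: "\<And>w. w \<noteq> 0 \<Longrightarrow> G (p * w) = G w" and "x \<noteq> 0"
    and g: "g analytic_on {x}" "\<forall>\<^sub>F w in at x. G w = g w"
  shows "\<exists>h. h analytic_on {p powi m * x} \<and> (\<forall>\<^sub>F w in at (p powi m * x). G w = h w)"
proof -
  define c where "c = p powi m"
  have "c \<noteq> 0"
    using assms(1) by (simp add: c_def)
  have "(g \<circ> (\<lambda>w. w / c)) analytic_on {c * x}"
    by (rule analytic_on_compose) (use g(1) \<open>c \<noteq> 0\<close> in \<open>auto intro!: analytic_intros\<close>)
  moreover have "\<forall>\<^sub>F w in at (c * x). G w = g (w / c)"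
  proof -
    have "\<forall>\<^sub>F w in at (c * x). G (w / c) = g (w / c)"
      using filterlim_iff[THEN iffD1, OF filterlim_divide_at[OF \<open>c \<noteq> 0\<close>], rule_format, OF g(2)]
      by simp
    moreover have "\<forall>\<^sub>F w in at (c * x). w \<noteq> 0"
      using \<open>c \<noteq> 0\<close> \<open>x \<noteq> 0\<close> by (intro eventually_neq_at_within)
    ultimately show ?thesis
    proof eventually_elim
      case (elim w)
      have "w / c \<noteq> 0"
        using elim \<open>c \<noteq> 0\<close> by simp
      hence "G (p powi m * (w / c)) = G (w / c)"
        using powi_periodic[where G = G and p = p and m = m and w = "w / c"] per assms(1) by blast
      thus ?case
        using elim \<open>c \<noteq> 0\<close> by (simp add: c_def[symmetric])
    qed
  qed
  ultimately show ?thesis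
    unfolding c_def o_def by blast
qed

lemma remove_sings_mult_periodic:
  fixes G :: "complex \<Rightarrow> complex"
  assumes "p \<noteq> 0" and per: "\<And>w. w \<noteq> 0 \<Longrightarrow> G (p * w) = G w"
    and "x \<noteq> 0" and lim: "G \<midarrow>x\<rightarrow> remove_sings G x"
  shows "remove_sings G (p * x) = remove_sings G x"
proof -
  have "(\<lambda>w. G (w / p)) \<midarrow>p * x\<rightarrow> remove_sings G x"
    by (rule filterlim_compose[OF lim filterlim_divide_at[OF assms(1)]])
  moreover have "\<forall>\<^sub>F w in at (p * x). G (w / p) = G w"
    using eventually_neq_at_within[of 0 "p * x"]
  proof eventually_elim
    case (elim w)
    thus ?case
      using per[of "w / p"] assms(1) by simp
  qed
  ultimately have "G \<midarrow>p * x\<rightarrow> remove_sings G x"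
    by (rule Lim_transform_eventually)
  thus ?thesis
    using remove_sings_eqI by blast
qed

lemma mult_periodic_bounded:
  fixes H :: "complex \<Rightarrow> complex"
  assumes p: "norm p < 1" "p \<noteq> 0" and "continuous_on (- {0}) H"
    and per: "\<And>x. x \<noteq> 0 \<Longrightarrow> H (p * x) = H x"
  shows "\<exists>B. \<forall>x. x \<noteq> 0 \<longrightarrow> norm (H x) \<le> B"
proof -
  define K where "K = cball (0::complex) 1 - ball 0 (norm p)"
  have "compact K"
    unfolding K_def by (intro compact_diff) auto
  moreover have "K \<subseteq> - {0}"
    using p unfolding K_def by auto
  hence "continuous_on K H"
    using assms(3) continuous_on_subset by blast
  ultimately have "bounded (H ` K)"
    using compact_continuous_image compact_imp_bounded by blast
  then obtain B where B: "\<And>x. x \<in> K \<Longrightarrow> norm (H x) \<le> B"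
    by (auto simp: bounded_iff)
  have "norm (H x) \<le> B" if x: "x \<noteq> 0" for x
  proof -
    obtain m where "norm p \<le> norm (p powi m * x)" "norm (p powi m * x) \<le> 1"
      using powi_mult_in_annulus[OF p x] by blast
    moreover have "H (p powi m * x) = H x"
      by (rule powi_periodic[of H p, OF per p(2) x])
    ultimately show ?thesis
      using B[of "p powi m * x"] by (simp add: K_def)
  qed
  thus ?thesis
    by blast
qed

lemma periodic_liouville:
  fixes G :: "complex \<Rightarrow> complex"
  assumes p: "norm p < 1" "p \<noteq> 0"
    and per: "\<And>w. w \<noteq> 0 \<Longrightarrow> G (p * w) = G w"
    and loc: "\<And>x. x \<noteq> 0 \<Longrightarrow> \<exists>g. g analytic_on {x} \<and> (\<forall>\<^sub>F w in at x. G w = g w)"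
  shows "\<exists>c. \<forall>x. x \<noteq> 0 \<longrightarrow> remove_sings G x = c"
proof -
  define H where "H = remove_sings G"
  have lim: "G \<midarrow>x\<rightarrow> H x" and ana: "H analytic_on {x}" if x: "x \<noteq> 0" for x
  proof -
    obtain g where "g analytic_on {x}" "\<forall>\<^sub>F w in at x. G w = g w"
      using loc[OF x] by blast
    thus "G \<midarrow>x\<rightarrow> H x" "H analytic_on {x}"
      unfolding H_def by (rule remove_sings_local_representative)+
  qed
  have "H analytic_on - {0}"
    using ana analytic_on_analytic_at by blast
  hence hol: "H holomorphic_on - {0}"
    by (rule analytic_imp_holomorphic)
  have "H (p * x) = H x" if "x \<noteq> 0" for x
    using remove_sings_mult_periodic[where G = G, OF p(2) per that] lim[OF that]
    by (simp add: H_def)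
  then obtain B where B: "\<And>x. x \<noteq> 0 \<Longrightarrow> norm (H x) \<le> B"
    using mult_periodic_bounded[OF p holomorphic_on_imp_continuous_on[OF hol]] by blast
  have "bounded (range (H \<circ> exp))"
    unfolding bounded_iff using B[OF exp_not_eq_zero] by auto
  moreover have "(H \<circ> exp) holomorphic_on UNIV"
    by (rule holomorphic_on_compose_gen[where t = "- {0}"]) (auto intro: holomorphic_intros hol)
  ultimately obtain c where c: "\<And>z. (H \<circ> exp) z = c"
    using Liouville_theorem[of "H \<circ> exp"] unfolding constant_on_def by blast
  have "H x = c" if "x \<noteq> 0" for x
    using c[of "Ln x"] that by simp
  thus ?thesis
    unfolding H_def by blast
qed

section \<open>The addition formula\<close>

definition ellE_pm :: "complex \<Rightarrow> complex \<Rightarrow> complex \<Rightarrow> complex" where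
  "ellE_pm p y x = ellE (x * y) p * ellE (x / y) p"

lemma ellE_pm_mult_nome:
  assumes "norm p < 1" "p \<noteq> 0" "x \<noteq> 0" "y \<noteq> 0"
  shows "ellE_pm p y (p * x) = ellE_pm p y x / x ^ 2"
proof -
  have "ellE_pm p y (p * x) = ellE (p * (x * y)) p * ellE (p * (x / y)) p"
    unfolding ellE_pm_def by (simp add: mult.assoc)
  also have "\<dots> = (- ellE (x * y) p / (x * y)) * (- ellE (x / y) p / (x / y))"
    using ellE_mult_nome[OF assms(1) _ assms(2), of "x * y"]
      ellE_mult_nome[OF assms(1) _ assms(2), of "x / y"]
      assms(3,4) by simp
  also have "\<dots> = ellE_pm p y x / x ^ 2"
    unfolding ellE_pm_def using assms by (simp add: field_simps power2_eq_square)
  finally show ?thesis .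
qed

lemma ellE_pm_inverse:
  assumes "norm p < 1" "x \<noteq> 0" "y \<noteq> 0"
  shows "ellE_pm p y (1 / x) = ellE_pm p y x / x ^ 2"
proof -
  have "ellE_pm p y (1 / x) = ellE (1 / (x / y)) p * ellE (1 / (x * y)) p"
    unfolding ellE_pm_def by simp
  also have "\<dots> = (- ellE (x / y) p / (x / y)) * (- ellE (x * y) p / (x * y))"
    using ellE_inverse[OF assms(1), of "x / y"] ellE_inverse[OF assms(1), of "x * y"] assms(2,3)
    by simp
  also have "\<dots> = ellE_pm p y x / x ^ 2"
    unfolding ellE_pm_def using assms by (simp add: field_simps power2_eq_square)
  finally show ?thesis .
qed

lemma ellE_pm_commute:
  assumes "norm p < 1" "u \<noteq> 0" "v \<noteq> 0"
  shows "ellE_pm p u v = - (v / u) * ellE_pm p v u"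
  unfolding ellE_pm_def using ellE_divide_commute[OF assms(1,3,2)] by (simp add: mult_ac)

lemma ellE_pm_self:
  assumes "norm p < 1" "v \<noteq> 0"
  shows "ellE_pm p v v = 0"
  unfolding ellE_pm_def using assms ellE_one by simp

lemma analytic_on_ellE_pm:
  assumes "norm p < 1" "y \<noteq> 0"
  shows "ellE_pm p y analytic_on - {0}"
  unfolding ellE_pm_def[abs_def] using assms by (intro analytic_intros) auto

lemma ellE_pm_eq_0_imp:
  assumes "norm p < 1" "x \<noteq> 0" "u \<noteq> 0" "ellE_pm p u x = 0"
  shows "\<exists>m x0. (x0 = u \<or> x0 = 1 / u) \<and> x = p powi m * x0"
proof -
  have "ellE (x * u) p = 0 \<or> ellE (x / u) p = 0"
    using assms(4) by (simp add: ellE_pm_def)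
  moreover have "x * u \<noteq> 0" "x / u \<noteq> 0"
    using assms(2,3) by simp_all
  ultimately obtain m where "x * u = p powi m \<or> x / u = p powi m"
    using ellE_eq_0_imp_powi[OF assms(1)] by blast
  hence "x = p powi m * (1 / u) \<or> x = p powi m * u"
    using assms(3) by (auto simp: field_simps)
  thus ?thesis
    by blast
qed

lemma ellE_pm_simple_zero:
  assumes "norm p < 1" "u \<noteq> 0" "ellE (u * u) p \<noteq> 0" "x0 = u \<or> x0 = 1 / u"
  shows "\<exists>K. K analytic_on {x0} \<and> K x0 \<noteq> 0 \<and> (\<forall>w. ellE_pm p u w = (w - x0) * K w)"
proof -
  define R where "R = (\<lambda>z. qpoch_inf p (z * p) * qpoch_inf p (p / z))"
  have E: "ellE z p = (1 - z) * R z" for z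
    unfolding R_def by (rule ellE_eq_one_minus_mult[OF assms(1)])
  have R1: "R 1 \<noteq> 0"
    using qpoch_inf_self_nonzero[OF assms(1)] by (simp add: R_def)
  have "R analytic_on - {0}"
    unfolding R_def using assms(1) by (intro analytic_intros) auto
  hence R_at: "(\<lambda>w. R (f w)) analytic_on {x0}" if "f analytic_on {x0}" "f x0 \<noteq> 0" for f
    using analytic_on_compose[OF that(1), of R] analytic_on_subset that(2)
    by (fastforce simp: o_def)
  have ellE_uu: "ellE (1 / (u * u)) p \<noteq> 0"
    using ellE_inverse[OF assms(1), of "u * u"] assms(2,3) by simp
  from assms(4) show ?thesis
  proof
    assume x0: "x0 = u"
    show ?thesis
    proof (intro exI conjI allI)
      show "(\<lambda>w. - (1 / u) * ellE (w * u) p * R (w / u)) analytic_on {x0}"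
        using assms x0 by (intro analytic_intros R_at) auto
      show "- (1 / u) * ellE (x0 * u) p * R (x0 / u) \<noteq> 0"
        using assms R1 x0 by simp
      show "ellE_pm p u w = (w - x0) * (- (1 / u) * ellE (w * u) p * R (w / u))" for w
        unfolding ellE_pm_def E[of "w / u"] using assms(2) x0 by (simp add: field_simps)
    qed
  next
    assume x0: "x0 = 1 / u"
    show ?thesis
    proof (intro exI conjI allI)
      show "(\<lambda>w. - u * R (w * u) * ellE (w / u) p) analytic_on {x0}"
        using assms x0 by (intro analytic_intros R_at) auto
      show "- u * R (x0 * u) * ellE (x0 / u) p \<noteq> 0"
        using assms R1 x0 ellE_uu by simp
      show "ellE_pm p u w = (w - x0) * (- u * R (w * u) * ellE (w / u) p)" for w
        unfolding ellE_pm_def E[of "w * u"] using assms(2) x0 by (simp add: field_simps)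
    qed
  qed
qed

lemma removable_quotient_at_zero:
  assumes "N holomorphic_on S" "open S" "x0 \<in> S" "N x0 = 0"
    and "K analytic_on {x0}" "K x0 \<noteq> 0" "\<And>w. D w = (w - x0) * K w"
  shows "\<exists>g. g analytic_on {x0} \<and> (\<forall>\<^sub>F w in at x0. N w / D w = g w)"
proof -
  define Q where "Q = (\<lambda>z. if z = x0 then deriv N x0 else (N z - N x0) / (z - x0))"
  have "Q holomorphic_on S"
    unfolding Q_def by (rule pole_lemma[OF assms(1)]) (use assms(2,3) interior_open in auto)
  hence "Q analytic_on {x0}"
    using assms(2,3) analytic_on_open analytic_on_subset by blast
  hence "(\<lambda>w. Q w / K w) analytic_on {x0}"
    using assms(5,6) by (intro analytic_on_divide) auto
  moreover have "N w / D w = Q w / K w" if "w \<noteq> x0" for w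
    using that assms(4,7) by (simp add: Q_def)
  hence "\<forall>\<^sub>F w in at x0. N w / D w = Q w / K w"
    by (auto simp: eventually_at_filter intro: always_eventually)
  ultimately show ?thesis
    by blast
qed

lemma ellE_pm_quotient_local_representative:
  fixes N :: "complex \<Rightarrow> complex"
  assumes p: "norm p < 1" "p \<noteq> 0" and u: "u \<noteq> 0" "ellE (u * u) p \<noteq> 0"
    and N: "N analytic_on - {0}" "\<And>w. w \<noteq> 0 \<Longrightarrow> N (p * w) = N w / w ^ 2"
    and zeros: "N u = 0" "N (1 / u) = 0" and x: "x \<noteq> 0"
  shows "\<exists>g. g analytic_on {x} \<and> (\<forall>\<^sub>F w in at x. N w / ellE_pm p u w = g w)"
proof (cases "ellE_pm p u x = 0")
  case False
  have "(\<lambda>w. N w / ellE_pm p u w) analytic_on {x}"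
    using False x
    by (intro analytic_on_divide analytic_on_subset[OF N(1)]
        analytic_on_subset[OF analytic_on_ellE_pm[OF p(1) u(1)]]) auto
  thus ?thesis
    by auto
next
  case True
  define G where "G w = N w / ellE_pm p u w" for w
  have perG: "G (p * w) = G w" if "w \<noteq> 0" for w
    unfolding G_def using N(2)[OF that] ellE_pm_mult_nome[OF p that u(1)] that by simp
  obtain m x0 where x0: "x0 = u \<or> x0 = 1 / u" and x_eq: "x = p powi m * x0"
    using ellE_pm_eq_0_imp[OF p(1) x u(1) True] by blast
  obtain K where "K analytic_on {x0}" "K x0 \<noteq> 0" "\<forall>w. ellE_pm p u w = (w - x0) * K w"
    using ellE_pm_simple_zero[OF p(1) u x0] by blast
  hence "\<exists>g. g analytic_on {x0} \<and> (\<forall>\<^sub>F w in at x0. G w = g w)"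
    unfolding G_def
    by (intro removable_quotient_at_zero[OF analytic_imp_holomorphic[OF N(1)]])
       (use x0 u zeros in auto)
  then obtain g where "g analytic_on {x0}" "\<forall>\<^sub>F w in at x0. G w = g w"
    by blast
  moreover have "x0 \<noteq> 0"
    using x0 u by auto
  ultimately show ?thesis
    unfolding x_eq G_def[symmetric]
    by (intro periodic_local_representative[where G = G, OF p(2) perG])
qed

text \<open>\<open>N\<close> is a theta function of the same degree as \<open>ellE_pm p u\<close> and vanishes at its zeros, so
  their quotient is \<open>p\<close>-periodic without poles.\<close>

lemma eq_const_mult_ellE_pm:
  fixes N :: "complex \<Rightarrow> complex"
  assumes p: "norm p < 1" "p \<noteq> 0" and u: "u \<noteq> 0" "ellE (u * u) p \<noteq> 0"
    and N: "N analytic_on - {0}" "\<And>w. w \<noteq> 0 \<Longrightarrow> N (p * w) = N w / w ^ 2"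
    and zeros: "N u = 0" "N (1 / u) = 0"
  shows "\<exists>c. \<forall>x. x \<noteq> 0 \<longrightarrow> N x = c * ellE_pm p u x"
proof -
  define G where "G = (\<lambda>x. N x / ellE_pm p u x)"
  have "G (p * w) = G w" if "w \<noteq> 0" for w
    unfolding G_def using N(2)[OF that] ellE_pm_mult_nome[OF p that u(1)] that by simp
  moreover have "\<exists>g. g analytic_on {x} \<and> (\<forall>\<^sub>F w in at x. G w = g w)" if "x \<noteq> 0" for x
    unfolding G_def by (rule ellE_pm_quotient_local_representative[OF assms that])
  ultimately obtain c where c: "\<And>x. x \<noteq> 0 \<Longrightarrow> remove_sings G x = c"
    using periodic_liouville[OF p, of G] by blast
  have "N x = c * ellE_pm p u x" if x: "x \<noteq> 0" for x
  proof (cases "ellE_pm p u x = 0")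
    case False
    have "G analytic_on {x}"
      unfolding G_def using False x
      by (intro analytic_on_divide analytic_on_subset[OF N(1)]
          analytic_on_subset[OF analytic_on_ellE_pm[OF p(1) u(1)]]) auto
    hence "G x = c"
      using c[OF x] by simp
    thus ?thesis
      using False by (simp add: G_def field_simps)
  next
    case True
    then obtain m x0 where x0: "x0 = u \<or> x0 = 1 / u" and x_eq: "x = p powi m * x0"
      using ellE_pm_eq_0_imp[OF p(1) x u(1)] by blast
    have "(N (p * w) = 0) = (N w = 0)" if "w \<noteq> 0" for w
      using N(2)[OF that] that by simp
    moreover have "x0 \<noteq> 0" "N x0 = 0"
      using x0 u(1) zeros by auto
    ultimately have "N x = 0"
      unfolding x_eq using powi_periodic[where G = "\<lambda>w. N w = 0" and p = p and w = x0] p(2) by simp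
    thus ?thesis
      using True by simp
  qed
  thus ?thesis
    by blast
qed

lemma ellE_pm_addition_generic:
  assumes p: "norm p < 1" "p \<noteq> 0" and nz: "x \<noteq> 0" "y \<noteq> 0" "u \<noteq> 0" "v \<noteq> 0"
    and uu: "ellE (u * u) p \<noteq> 0" and uv: "ellE_pm p u v \<noteq> 0"
  shows "ellE_pm p y x * ellE_pm p v u - ellE_pm p v x * ellE_pm p y u
       = (u / y) * ellE_pm p v y * ellE_pm p u x"
proof -
  define N where "N = (\<lambda>x. ellE_pm p y x * ellE_pm p v u - ellE_pm p v x * ellE_pm p y u)"
  have "N analytic_on - {0}"
    unfolding N_def using nz by (intro analytic_intros analytic_on_ellE_pm[OF p(1)]) auto
  moreover have "N (p * w) = N w / w ^ 2" if "w \<noteq> 0" for w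
    unfolding N_def using ellE_pm_mult_nome[OF p that nz(2)] ellE_pm_mult_nome[OF p that nz(4)]
    by (simp add: diff_divide_distrib)
  moreover have "N u = 0" "N (1 / u) = 0"
    unfolding N_def using ellE_pm_inverse[OF p(1) nz(3)] nz by simp_all
  ultimately have "\<exists>c. \<forall>x. x \<noteq> 0 \<longrightarrow> N x = c * ellE_pm p u x"
    by (rule eq_const_mult_ellE_pm[OF p nz(3) uu])
  then obtain c where c: "\<And>x. x \<noteq> 0 \<Longrightarrow> N x = c * ellE_pm p u x"
    by blast
  have swap: "ellE_pm p y v = - (v / y) * ellE_pm p v y" "ellE_pm p u v = - (v / u) * ellE_pm p v u"
    using ellE_pm_commute[OF p(1) nz(2,4)] ellE_pm_commute[OF p(1) nz(3,4)] by auto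
  have "c * ellE_pm p u v = ellE_pm p y v * ellE_pm p v u"
    using c[OF nz(4)] ellE_pm_self[OF p(1) nz(4)] by (simp add: N_def)
  also have "\<dots> = (u / y * ellE_pm p v y) * ellE_pm p u v"
    unfolding swap using nz by (simp add: field_simps)
  finally have "c = (u / y) * ellE_pm p v y"
    using uv mult_cancel_right by blast
  thus ?thesis
    using c[OF nz(1)] by (simp add: N_def)
qed

lemma isCont_eventually_eq_imp_eq:
  fixes f g :: "'a :: {perfect_space, t2_space} \<Rightarrow> 'b :: t2_space"
  assumes "isCont f a" "isCont g a" "\<forall>\<^sub>F x in at a. f x = g x"
  shows "f a = g a"
proof -
  have "\<forall>\<^sub>F x in at a. g x = f x"
    using assms(3) by (auto elim: eventually_mono)
  with isContD[OF assms(2)] have "f \<midarrow>a\<rightarrow> g a"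
    by (rule Lim_transform_eventually)
  thus ?thesis
    using isContD[OF assms(1)] tendsto_unique[OF at_neq_bot] by blast
qed

text \<open>The genericity conditions are removed by continuity in \<open>u\<close>: each fails only on a
  discrete set.\<close>

theorem ellE_pm_addition:
  assumes p: "norm p < 1" and nz: "x \<noteq> 0" "y \<noteq> 0" "u \<noteq> 0" "v \<noteq> 0"
  shows "ellE_pm p y x * ellE_pm p v u - ellE_pm p v x * ellE_pm p y u
       = (u / y) * ellE_pm p v y * ellE_pm p u x"
proof (cases "p = 0")
  case True
  thus ?thesis
    using nz by (simp add: ellE_pm_def ellE_nome_zero field_simps)
next
  case False
  define F where "F = (\<lambda>u. ellE_pm p y x * ellE_pm p v u - ellE_pm p v x * ellE_pm p y u
                           - (u / y) * ellE_pm p v y * ellE_pm p u x)"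
  have "F analytic_on {u}"
    unfolding F_def ellE_pm_def using p nz by (intro analytic_intros) auto
  moreover have "\<forall>\<^sub>F w in at u. F w = 0"
  proof -
    have "\<forall>\<^sub>F w in at u. ellE (w * w) p \<noteq> 0"
      by (rule eventually_ellE_nonzero[where \<beta> = \<i>]) (use p nz in \<open>auto intro!: analytic_intros\<close>)
    moreover have "\<forall>\<^sub>F w in at u. ellE (v * w) p \<noteq> 0"
      by (rule eventually_ellE_nonzero[where \<beta> = "- 1 / v"])
         (use p nz in \<open>auto intro!: analytic_intros\<close>)
    moreover have "\<forall>\<^sub>F w in at u. ellE (v / w) p \<noteq> 0"
      by (rule eventually_ellE_nonzero[where \<beta> = "- v"])
         (use p nz in \<open>auto intro!: analytic_intros\<close>)
    moreover have "\<forall>\<^sub>F w in at u. w \<noteq> 0"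
      by (rule eventually_neq_at_within)
    ultimately show ?thesis
    proof eventually_elim
      case (elim w)
      hence "ellE_pm p w v \<noteq> 0"
        by (simp add: ellE_pm_def mult.commute)
      thus ?case
        unfolding F_def using ellE_pm_addition_generic[OF p False nz(1,2) elim(4) nz(4) elim(1)]
        by simp
    qed
  qed
  ultimately have "F u = 0"
    using isCont_eventually_eq_imp_eq[where f = F and g = "\<lambda>_. 0"] analytic_at_imp_isCont by auto
  thus ?thesis
    by (simp add: F_def)
qed

section \<open>Elliptic Lagrange interpolation\<close>

definition ellE_sym :: "complex \<Rightarrow> complex \<Rightarrow> complex \<Rightarrow> complex \<Rightarrow> complex" where
  "ellE_sym p A t c = ellE (c * t) p * ellE (A * t / c) p"

lemma ellE_sym_inverse_self:
  assumes "norm p < 1" "t \<noteq> 0"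
  shows "ellE_sym p A t (1 / t) = 0"
  unfolding ellE_sym_def using assms ellE_one by simp

lemma ellE_sym_three_term:
  assumes p: "norm p < 1" and nz: "A \<noteq> 0" "a \<noteq> 0" "t0 \<noteq> 0" "t1 \<noteq> 0" "c \<noteq> 0"
  shows "ellE_sym p A a c * ellE_sym p A t0 (1 / t1)
       = ellE_sym p A t0 c * ellE_sym p A a (1 / t1)
         - (t0 / t1) * ellE (A * a * t0) p * ellE (a / t0) p * ellE_sym p A t1 c"
proof -
  obtain s where s: "s * s = A"
    by (metis power2_csqrt power2_eq_square)
  hence "s \<noteq> 0"
    using nz(1) by auto
  define H where "H = (\<lambda>t w. ellE_pm p (s * t) (w / s))"
  have sym_H: "ellE_sym p A t w = - (A * t / w) * H t w" if "t \<noteq> 0" "w \<noteq> 0" for t w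
  proof -
    have "H t w = ellE (w * t) p * ellE (w / (A * t)) p"
      unfolding H_def ellE_pm_def using \<open>s \<noteq> 0\<close> by (simp add: s[symmetric] field_simps)
    thus ?thesis
      unfolding ellE_sym_def using ellE_divide_commute[OF p, of "A * t" w] nz(1) that by simp
  qed
  have "H a c * H t0 (1 / t1) - H t0 c * H a (1 / t1)
      = (1 / t1 / s / (s * a)) * ellE_pm p (s * t0) (s * a) * ellE_pm p (1 / t1 / s) (c / s)"
    unfolding H_def by (rule ellE_pm_addition[OF p]) (use nz \<open>s \<noteq> 0\<close> in auto)
  also have "ellE_pm p (s * t0) (s * a) = ellE (A * a * t0) p * ellE (a / t0) p"
    unfolding ellE_pm_def using \<open>s \<noteq> 0\<close> by (simp add: s[symmetric] mult_ac)
  also have "ellE_pm p (1 / t1 / s) (c / s) = H t1 c"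
    unfolding H_def ellE_pm_def using \<open>s \<noteq> 0\<close> nz by (simp add: field_simps)
  also have "1 / t1 / s / (s * a) = 1 / (A * a * t1)"
    by (simp add: s[symmetric] field_simps)
  finally have "H a c * H t0 (1 / t1) - H t0 c * H a (1 / t1)
      = 1 / (A * a * t1) * (ellE (A * a * t0) p * ellE (a / t0) p) * H t1 c" .
  thus ?thesis
    using nz by (simp add: sym_H field_simps)
qed

lemma ellE_sym_span:
  assumes "norm p < 1" "A \<noteq> 0" "a \<noteq> 0" "t0 \<noteq> 0" "t1 \<noteq> 0" and d: "ellE_sym p A t0 (1 / t1) \<noteq> 0"
  shows "\<exists>\<alpha> \<beta>. \<forall>c. c \<noteq> 0 \<longrightarrow> ellE_sym p A a c = \<alpha> * ellE_sym p A t0 c + \<beta> * ellE_sym p A t1 c"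
proof (intro exI allI impI)
  fix c :: complex
  assume "c \<noteq> 0"
  from ellE_sym_three_term[OF assms(1-5) this] d
  show "ellE_sym p A a c = ellE_sym p A a (1 / t1) / ellE_sym p A t0 (1 / t1) * ellE_sym p A t0 c
      + (- (t0 / t1) * ellE (A * a * t0) p * ellE (a / t0) p / ellE_sym p A t0 (1 / t1))
        * ellE_sym p A t1 c"
    by (simp add: field_simps)
qed

lemma prod_insert_remove_atMost_Suc:
  fixes g :: "nat \<Rightarrow> 'a :: comm_monoid_mult"
  assumes "k \<le> n"
  shows "(\<Prod>j\<in>{..Suc n} - {k}. g j) = g (Suc n) * (\<Prod>j\<in>{..n} - {k}. g j)"
proof -
  have "{..Suc n} - {k} = insert (Suc n) ({..n} - {k})"
    using assms by auto
  thus ?thesis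
    by simp
qed

lemma ellE_sym_prod_expansion:
  fixes t a :: "nat \<Rightarrow> complex"
  assumes p: "norm p < 1" and A: "A \<noteq> 0"
    and t: "\<And>j. j \<le> n \<Longrightarrow> t j \<noteq> 0" and a: "\<And>i. i < n \<Longrightarrow> a i \<noteq> 0"
    and nodes: "\<And>j k. j \<le> n \<Longrightarrow> k \<le> n \<Longrightarrow> j \<noteq> k \<Longrightarrow> ellE_sym p A (t j) (1 / t k) \<noteq> 0"
  shows "\<exists>C. \<forall>c. c \<noteq> 0 \<longrightarrow>
           (\<Prod>i<n. ellE_sym p A (a i) c) = (\<Sum>k\<le>n. C k * (\<Prod>j\<in>{..n} - {k}. ellE_sym p A (t j) c))"
  using t a nodes
proof (induction n)
  case 0
  show ?case
    by (intro exI[of _ "\<lambda>_. 1"]) simp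
next
  case (Suc n)
  let ?g = "\<lambda>j c. ellE_sym p A (t j) c"
  obtain C where C: "\<And>c. c \<noteq> 0 \<Longrightarrow>
      (\<Prod>i<n. ellE_sym p A (a i) c) = (\<Sum>k\<le>n. C k * (\<Prod>j\<in>{..n} - {k}. ?g j c))"
    using Suc by force
  \<comment> \<open>split the new factor along the node \<open>t k\<close> of each summand and the new node \<open>t (Suc n)\<close>\<close>
  have "\<exists>\<alpha> \<beta>. \<forall>c. c \<noteq> 0 \<longrightarrow> ellE_sym p A (a n) c = \<alpha> * ?g k c + \<beta> * ?g (Suc n) c"
    if "k \<le> n" for k
    using that Suc.prems by (intro ellE_sym_span[OF p A]) auto
  then obtain \<alpha> \<beta> where dec: "\<And>k c. k \<le> n \<Longrightarrow> c \<noteq> 0 \<Longrightarrow>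
      ellE_sym p A (a n) c = \<alpha> k * ?g k c + \<beta> k * ?g (Suc n) c"
    by metis
  define C' where "C' = (\<lambda>k. if k = Suc n then (\<Sum>k\<le>n. C k * \<alpha> k) else C k * \<beta> k)"
  show ?case
  proof (intro exI[of _ C'] allI impI)
    fix c :: complex
    assume "c \<noteq> 0"
    have "(\<Prod>i<Suc n. ellE_sym p A (a i) c)
        = (\<Sum>k\<le>n. C k * (ellE_sym p A (a n) c * (\<Prod>j\<in>{..n} - {k}. ?g j c)))"
      using C[OF \<open>c \<noteq> 0\<close>] by (simp add: sum_distrib_left mult_ac)
    also have "\<dots> = (\<Sum>k\<le>n. C k * (\<alpha> k * (\<Prod>j\<in>{..Suc n} - {Suc n}. ?g j c)
                                  + \<beta> k * (\<Prod>j\<in>{..Suc n} - {k}. ?g j c)))"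
    proof (rule sum.cong[OF refl])
      fix k
      assume "k \<in> {..n}"
      moreover have "{..Suc n} - {Suc n} = {..n}"
        by auto
      ultimately have "?g k c * (\<Prod>j\<in>{..n} - {k}. ?g j c) = (\<Prod>j\<in>{..Suc n} - {Suc n}. ?g j c)"
        by (simp add: prod.remove)
      thus "C k * (ellE_sym p A (a n) c * (\<Prod>j\<in>{..n} - {k}. ?g j c))
          = C k * (\<alpha> k * (\<Prod>j\<in>{..Suc n} - {Suc n}. ?g j c) + \<beta> k * (\<Prod>j\<in>{..Suc n} - {k}. ?g j c))"
        using dec[of k c] \<open>k \<in> {..n}\<close> \<open>c \<noteq> 0\<close> prod_insert_remove_atMost_Suc[of k n "\<lambda>j. ?g j c"]
        by (simp add: algebra_simps)
    qed
    also have "\<dots> = (\<Sum>k\<le>Suc n. C' k * (\<Prod>j\<in>{..Suc n} - {k}. ?g j c))"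
      by (simp add: C'_def sum.distrib sum_distrib_right algebra_simps)
    finally show "(\<Prod>i<Suc n. ellE_sym p A (a i) c)
        = (\<Sum>k\<le>Suc n. C' k * (\<Prod>j\<in>{..Suc n} - {k}. ?g j c))" .
  qed
qed

theorem ellE_sym_interpolation:
  fixes t a :: "nat \<Rightarrow> complex"
  assumes p: "norm p < 1" and A: "A \<noteq> 0"
    and t: "\<And>j. j \<le> n \<Longrightarrow> t j \<noteq> 0" and a: "\<And>i. i < n \<Longrightarrow> a i \<noteq> 0"
    and nodes: "\<And>j k. j \<le> n \<Longrightarrow> k \<le> n \<Longrightarrow> j \<noteq> k \<Longrightarrow> ellE_sym p A (t j) (1 / t k) \<noteq> 0"
    and "c \<noteq> 0"
  shows "(\<Prod>i<n. ellE_sym p A (a i) c) =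
    (\<Sum>k\<le>n. (\<Prod>i<n. ellE_sym p A (a i) (1 / t k)) / (\<Prod>j\<in>{..n} - {k}. ellE_sym p A (t j) (1 / t k))
             * (\<Prod>j\<in>{..n} - {k}. ellE_sym p A (t j) c))"
proof -
  obtain C where C: "\<And>c. c \<noteq> 0 \<Longrightarrow>
      (\<Prod>i<n. ellE_sym p A (a i) c) = (\<Sum>k\<le>n. C k * (\<Prod>j\<in>{..n} - {k}. ellE_sym p A (t j) c))"
    using ellE_sym_prod_expansion[where t = t and a = a and n = n, OF p A t a nodes] by blast
  have "C k = (\<Prod>i<n. ellE_sym p A (a i) (1 / t k)) / (\<Prod>j\<in>{..n} - {k}. ellE_sym p A (t j) (1 / t k))"
    if k: "k \<le> n" for k
  proof -
    have z: "(\<Prod>j\<in>{..n} - {l}. ellE_sym p A (t j) (1 / t k)) = 0" if "l \<in> {..n} - {k}" for l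
      using that k ellE_sym_inverse_self[OF p t[OF k]] by (intro prod_zero) auto
    have "(\<Prod>i<n. ellE_sym p A (a i) (1 / t k))
        = (\<Sum>l\<le>n. C l * (\<Prod>j\<in>{..n} - {l}. ellE_sym p A (t j) (1 / t k)))"
      using C[of "1 / t k"] t[OF k] by simp
    also have "\<dots> = C k * (\<Prod>j\<in>{..n} - {k}. ellE_sym p A (t j) (1 / t k))
        + (\<Sum>l\<in>{..n} - {k}. C l * (\<Prod>j\<in>{..n} - {l}. ellE_sym p A (t j) (1 / t k)))"
      using k by (simp add: sum.remove)
    also have "(\<Sum>l\<in>{..n} - {k}. C l * (\<Prod>j\<in>{..n} - {l}. ellE_sym p A (t j) (1 / t k))) = 0"
      by (rule sum.neutral) (simp add: z)
    finally have "(\<Prod>i<n. ellE_sym p A (a i) (1 / t k))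
        = C k * (\<Prod>j\<in>{..n} - {k}. ellE_sym p A (t j) (1 / t k))"
      by simp
    moreover have "(\<Prod>j\<in>{..n} - {k}. ellE_sym p A (t j) (1 / t k)) \<noteq> 0"
      using nodes k by auto
    ultimately show ?thesis
      by simp
  qed
  thus ?thesis
    using C[OF \<open>c \<noteq> 0\<close>] by simp
qed

section \<open>Elliptic shifted factorials of nonnegative length\<close>

lemma power_split_Suc:
  fixes x :: "'a :: monoid_mult"
  assumes "i < m"
  shows "x ^ m = x ^ (m - Suc i) * x ^ Suc i"
proof -
  have "m = (m - Suc i) + Suc i"
    using assms by simp
  thus ?thesis
    by (metis power_add)
qed

definition efacn :: "complex \<Rightarrow> complex \<Rightarrow> complex \<Rightarrow> nat \<Rightarrow> complex" where
  "efacn x B p m = (\<Prod>i<m. ellE (x * B ^ i) p)"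

lemma efac_of_nat: "efac x B p (int m) = efacn x B p m"
  by (cases "m = 0") (simp_all add: efac_def efacn_def)

lemma efacn_0 [simp]: "efacn x B p 0 = 1"
  by (simp add: efacn_def)

lemma efacn_Suc: "efacn x B p (Suc m) = efacn x B p m * ellE (x * B ^ m) p"
  by (simp add: efacn_def)

lemma efacn_add: "efacn x B p (m + l) = efacn x B p m * efacn (x * B ^ m) B p l"
  by (induction l) (simp_all add: efacn_Suc power_add mult_ac)

lemma efacn_Suc_left: "efacn x B p (Suc m) = ellE x p * efacn (x * B) B p m"
  using efacn_add[of x B p 1 m] by (simp add: efacn_def)

lemma efacn_eq_0_iff: "efacn x B p m = 0 \<longleftrightarrow> (\<exists>i<m. ellE (x * B ^ i) p = 0)"
  by (auto simp: efacn_def)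

lemma efacn_nonzero_le: "efacn x B p m \<noteq> 0 \<Longrightarrow> k \<le> m \<Longrightarrow> efacn x B p k \<noteq> 0"
  by (auto simp: efacn_eq_0_iff)

lemma prod_efacn_interleave: "(\<Prod>i<r. efacn (x * q ^ i) (q ^ r) p k) = efacn x q p (r * k)"
proof (induction k)
  case (Suc k)
  have "(\<Prod>i<r. efacn (x * q ^ i) (q ^ r) p (Suc k))
      = efacn x q p (r * k) * (\<Prod>i<r. ellE (x * q ^ (r * k) * q ^ i) p)"
    by (simp add: efacn_Suc prod.distrib Suc power_mult[symmetric] power_add[symmetric] mult_ac)
  also have "\<dots> = efacn x q p (r * k + r)"
    unfolding efacn_add by (simp add: efacn_def)
  finally show ?case
    by (simp add: add.commute)
qed simp

lemma prod_ellE_divide_eq_efacn: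
  assumes "norm p < 1" "z \<noteq> 0" "q \<noteq> 0"
  shows "(\<Prod>j<m. ellE (q ^ j / z) p) = (\<Prod>j<m. - (q ^ j / z)) * efacn (z * q / q ^ m) q p m"
proof -
  have "(\<Prod>j<m. ellE (q ^ j / z) p) = (\<Prod>j<m. - (q ^ j / z) * ellE (z / q ^ j) p)"
    by (intro prod.cong refl ellE_divide_commute[OF assms(1)]) (use assms(2,3) in auto)
  also have "\<dots> = (\<Prod>j<m. - (q ^ j / z)) * (\<Prod>j<m. ellE (z / q ^ j) p)"
    by (rule prod.distrib)
  also have "(\<Prod>j<m. ellE (z / q ^ j) p) = (\<Prod>i<m. ellE (z / q ^ (m - Suc i)) p)"
    by (rule prod.nat_diff_reindex[symmetric])
  also have "\<dots> = efacn (z * q / q ^ m) q p m"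
    unfolding efacn_def
  proof (intro prod.cong refl)
    fix i
    assume "i \<in> {..<m}"
    hence "q ^ m = q ^ (m - Suc i) * q * q ^ i"
      using power_split_Suc[of i m q] by (simp add: mult.assoc)
    thus "ellE (z / q ^ (m - Suc i)) p = ellE (z * q / q ^ m * q ^ i) p"
      using assms(3) by (simp add: field_simps)
  qed
  finally show ?thesis .
qed

lemma isCont_efacn [continuous_intros]:
  assumes "norm p < 1" "isCont f a" "f a \<noteq> 0" "B \<noteq> 0"
  shows "isCont (\<lambda>z. efacn (f z) B p m) a"
  unfolding efacn_def using assms by (intro continuous_intros) auto

lemma eventually_efacn_nonzero:
  assumes "norm p < 1" "w \<noteq> 0" "B \<noteq> 0" "a \<noteq> 0"
  shows "\<forall>\<^sub>F z in at a. efacn (z * w) B p m \<noteq> 0"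
proof -
  have "\<forall>\<^sub>F z in at a. ellE (z * (w * B ^ i)) p \<noteq> 0" for i
    by (rule eventually_ellE_nonzero[where \<beta> = "- 1 / (w * B ^ i)"])
       (use assms in \<open>auto intro!: analytic_intros\<close>)
  hence "\<forall>\<^sub>F z in at a. \<forall>i\<in>{..<m}. ellE (z * (w * B ^ i)) p \<noteq> 0"
    by (intro eventually_ball_finite) auto
  thus ?thesis
    by eventually_elim (auto simp: efacn_eq_0_iff mult.assoc)
qed

section \<open>The terms of the series\<close>

definition wp_params :: "complex \<Rightarrow> complex \<Rightarrow> complex \<Rightarrow> complex \<Rightarrow> nat \<Rightarrow> nat \<Rightarrow> complex list" where
  "wp_params a b c q r n = [c, a * b / c] @ map (\<lambda>i. b * q ^ i) [1..<r + 1]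
     @ map (\<lambda>i. a * q ^ (n + i)) [0..<r] @ [q powi (- int (r * n))]"

lemma prod_list_map_upt: "(\<Prod>x\<leftarrow>map f [m..<n]. g x) = (\<Prod>i\<in>{m..<n}. g (f i))"
  by (simp add: prod.distinct_set_conv_list[symmetric] o_def)

lemma prod_upt_Suc_shift: "(\<Prod>i\<in>{1..<r + 1}. g i) = (\<Prod>i<r. g (Suc i))"
  using prod.atLeast_Suc_lessThan_Suc_shift[of g 0 r] by (simp add: atLeast0LessThan)

lemma power_int_minus_mult: "(q :: complex) powi (- int (r * n)) = 1 / (q ^ r) ^ n"
  by (simp only: power_int_minus_divide power_int_of_nat power_mult)

lemma prod_wp_params_efac:
  "(\<Prod>x\<leftarrow>wp_params a b c q r n. efac x (q ^ r) p (int k))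
    = efacn c (q ^ r) p k * efacn (a * b / c) (q ^ r) p k * efacn (b * q) q p (r * k)
      * efacn (a * q ^ n) q p (r * k) * efacn (1 / (q ^ r) ^ n) (q ^ r) p k"
proof -
  have "(\<Prod>x\<leftarrow>map (\<lambda>i. b * q ^ i) [1..<r + 1]. efac x (q ^ r) p (int k))
      = (\<Prod>i<r. efacn ((b * q) * q ^ i) (q ^ r) p k)"
    unfolding prod_list_map_upt efac_of_nat prod_upt_Suc_shift by (simp add: mult_ac)
  also have "\<dots> = efacn (b * q) q p (r * k)"
    by (rule prod_efacn_interleave)
  finally have 1: "(\<Prod>x\<leftarrow>map (\<lambda>i. b * q ^ i) [1..<r + 1]. efac x (q ^ r) p (int k))
      = efacn (b * q) q p (r * k)" .
  have "(\<Prod>x\<leftarrow>map (\<lambda>i. a * q ^ (n + i)) [0..<r]. efac x (q ^ r) p (int k))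
      = (\<Prod>i<r. efacn ((a * q ^ n) * q ^ i) (q ^ r) p k)"
    unfolding prod_list_map_upt efac_of_nat by (simp add: atLeast0LessThan power_add mult_ac)
  also have "\<dots> = efacn (a * q ^ n) q p (r * k)"
    by (rule prod_efacn_interleave)
  finally have 2: "(\<Prod>x\<leftarrow>map (\<lambda>i. a * q ^ (n + i)) [0..<r]. efac x (q ^ r) p (int k))
      = efacn (a * q ^ n) q p (r * k)" .
  show ?thesis
    unfolding wp_params_def map_append prod_list.append list.map prod_list.Cons prod_list.Nil
      1[unfolded efac_of_nat] 2[unfolded efac_of_nat] efac_of_nat power_int_minus_mult
    by (simp only: mult_1_right mult.assoc)
qed

lemma prod_wp_params_efac_dual:
  assumes "q \<noteq> 0" "a \<noteq> 0" "b \<noteq> 0" "c \<noteq> 0"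
  shows "(\<Prod>x\<leftarrow>wp_params a b c q r n. efac (a * b * q ^ r / x) (q ^ r) p (int k))
    = efacn (a * b * q ^ r / c) (q ^ r) p k * efacn (c * q ^ r) (q ^ r) p k * efacn a q p (r * k)
      * efacn (b * q / q ^ n) q p (r * k) * efacn (a * b * (q ^ r) ^ (n + 1)) (q ^ r) p k"
proof -
  have reverse: "(\<Prod>i<r. efacn (x * q ^ (r - Suc i)) (q ^ r) p k) = efacn x q p (r * k)" for x
    using prod.nat_diff_reindex[of "\<lambda>i. efacn (x * q ^ i) (q ^ r) p k" r] prod_efacn_interleave
    by simp
  have "(\<Prod>x\<leftarrow>map (\<lambda>i. b * q ^ i) [1..<r + 1]. efac (a * b * q ^ r / x) (q ^ r) p (int k))
      = (\<Prod>i<r. efacn (a * q ^ (r - Suc i)) (q ^ r) p k)"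
    unfolding prod_list_map_upt efac_of_nat prod_upt_Suc_shift
  proof (intro prod.cong refl)
    fix i
    assume "i \<in> {..<r}"
    thus "efacn (a * b * q ^ r / (b * q ^ Suc i)) (q ^ r) p k
        = efacn (a * q ^ (r - Suc i)) (q ^ r) p k"
      using power_split_Suc[of i r q] assms by simp
  qed
  hence 1: "(\<Prod>x\<leftarrow>map (\<lambda>i. b * q ^ i) [1..<r + 1]. efac (a * b * q ^ r / x) (q ^ r) p (int k))
      = efacn a q p (r * k)"
    unfolding reverse .
  have "(\<Prod>x\<leftarrow>map (\<lambda>i. a * q ^ (n + i)) [0..<r]. efac (a * b * q ^ r / x) (q ^ r) p (int k))
      = (\<Prod>i<r. efacn ((b * q / q ^ n) * q ^ (r - Suc i)) (q ^ r) p k)"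
    unfolding prod_list_map_upt efac_of_nat atLeast0LessThan
  proof (intro prod.cong refl)
    fix i
    assume "i \<in> {..<r}"
    thus "efacn (a * b * q ^ r / (a * q ^ (n + i))) (q ^ r) p k
        = efacn (b * q / q ^ n * q ^ (r - Suc i)) (q ^ r) p k"
      using power_split_Suc[of i r q] assms by (simp add: power_add field_simps)
  qed
  hence 2: "(\<Prod>x\<leftarrow>map (\<lambda>i. a * q ^ (n + i)) [0..<r]. efac (a * b * q ^ r / x) (q ^ r) p (int k))
      = efacn (b * q / q ^ n) q p (r * k)"
    unfolding reverse .
  have 3: "a * b * q ^ r / (a * b / c) = c * q ^ r"
    using assms by simp
  have 4: "a * b * q ^ r / q powi (- int (r * n)) = a * b * (q ^ r) ^ (n + 1)"
    unfolding power_int_minus_mult using assms by (simp add: power_add mult_ac)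
  show ?thesis
    unfolding wp_params_def map_append prod_list.append list.map prod_list.Cons prod_list.Nil
      1[unfolded efac_of_nat] 2[unfolded efac_of_nat] 3 4 efac_of_nat
    by (simp only: mult_1_right mult.assoc)
qed

definition wp_term :: "complex \<Rightarrow> complex \<Rightarrow> complex \<Rightarrow> complex \<Rightarrow> complex \<Rightarrow> nat \<Rightarrow> nat \<Rightarrow> nat \<Rightarrow> complex"
  where
  "wp_term a b c q p r n k =
     ellE (a * b * (q ^ r) ^ (2 * k)) p / ellE (a * b) p *
     (efacn (a * b) (q ^ r) p k * (efacn c (q ^ r) p k * efacn (a * b / c) (q ^ r) p k
        * efacn (b * q) q p (r * k) * efacn (a * q ^ n) q p (r * k)
        * efacn (1 / (q ^ r) ^ n) (q ^ r) p k)
      * (q ^ r) ^ k) /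
     (efacn (q ^ r) (q ^ r) p k * (efacn (a * b * q ^ r / c) (q ^ r) p k
        * efacn (c * q ^ r) (q ^ r) p k * efacn a q p (r * k) * efacn (b * q / q ^ n) q p (r * k)
        * efacn (a * b * (q ^ r) ^ (n + 1)) (q ^ r) p k))"

lemma efacn_inverse_power_eq_0:
  assumes "norm p < 1" "Q \<noteq> 0" "n < k"
  shows "efacn (1 / Q ^ n) Q p k = 0"
  using assms ellE_one unfolding efacn_eq_0_iff by (auto intro!: exI[of _ n])

lemma omega_wp_params:
  assumes "norm p < 1" "q \<noteq> 0" "a \<noteq> 0" "b \<noteq> 0" "c \<noteq> 0"
  shows "omega (a * b) (wp_params a b c q r n) (q ^ r) p = (\<Sum>k\<le>n. wp_term a b c q p r n k)"
proof -
  have "omega (a * b) (wp_params a b c q r n) (q ^ r) p = (\<Sum>k. wp_term a b c q p r n k)"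
    unfolding omega_def efac_of_nat prod_wp_params_efac[unfolded efac_of_nat]
      prod_wp_params_efac_dual[OF assms(2-5), unfolded efac_of_nat] wp_term_def ..
  also have "\<dots> = (\<Sum>k\<le>n. wp_term a b c q p r n k)"
  proof (rule suminf_finite)
    show "wp_term a b c q p r n k = 0" if "k \<notin> {..n}" for k
      using efacn_inverse_power_eq_0[OF assms(1), of "q ^ r" n k] that assms(2)
      by (simp add: wp_term_def)
  qed simp
  finally show ?thesis .
qed

lemma prod_remove_atMost_split:
  fixes g :: "nat \<Rightarrow> 'a :: comm_monoid_mult"
  assumes "k \<le> n"
  shows "(\<Prod>j\<in>{..n} - {k}. g j) = (\<Prod>j<k. g j) * (\<Prod>i<n - k. g (Suc k + i))"
proof -
  have split: "{..n} - {k} = {..<k} \<union> {Suc k..<Suc n}"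
    using assms by auto
  have "(\<Prod>j\<in>{..<k} \<union> {Suc k..<Suc n}. g j) = (\<Prod>j<k. g j) * (\<Prod>j\<in>{Suc k..<Suc n}. g j)"
    by (rule prod.union_disjoint) auto
  hence "(\<Prod>j\<in>{..n} - {k}. g j) = (\<Prod>j<k. g j) * (\<Prod>j\<in>{Suc k..<Suc n}. g j)"
    unfolding split .
  moreover have "{Suc k..<Suc n} = {0 + Suc k..<(n - k) + Suc k}"
    using assms by simp
  ultimately show ?thesis
    by (simp only: prod.shift_bounds_nat_ivl) (simp add: atLeast0LessThan add.commute)
qed

lemma prod_power_mult_self:
  fixes x :: "'a :: comm_monoid_mult"
  shows "(\<Prod>j<k. x ^ j) * (\<Prod>j<k. x ^ j) * x ^ k = (x ^ k) ^ k"
proof -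
  have "(\<Prod>j<k. x ^ j) * (\<Prod>j<k. x ^ j) * x ^ k = (\<Prod>j<k. x ^ j * x ^ (k - Suc j) * x)"
    by (simp add: prod.distrib prod.nat_diff_reindex)
  also have "\<dots> = (\<Prod>j<k. x ^ k)"
  proof (intro prod.cong refl)
    fix j
    assume "j \<in> {..<k}"
    hence "k = Suc (j + (k - Suc j))"
      by simp
    thus "x ^ j * x ^ (k - Suc j) * x = x ^ k"
      by (metis power_add power_Suc2)
  qed
  finally show ?thesis
    by simp
qed

lemma prod_minus_divide:
  fixes z :: complex
  shows "(\<Prod>j<k. - (f j / z)) = (- 1) ^ k * (\<Prod>j<k. f j) / z ^ k"
  by (induction k) (simp_all add: field_simps)

lemma prod_hole_ellE_power_ratio:
  assumes p: "norm p < 1" and Q: "Q \<noteq> 0" and k: "k \<le> n"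
  shows "efacn (1 / Q ^ n) Q p k * Q ^ k * (\<Prod>j\<in>{..n} - {k}. ellE (Q ^ j / Q ^ k) p) * Q ^ (k * n)
       = efacn Q Q p k * efacn Q Q p n"
proof -
  define \<mu> where "\<mu> z = (\<Prod>j<k. - (Q ^ j / z))" for z
  have low: "(\<Prod>j<k. ellE (Q ^ j / Q ^ k) p) = \<mu> (Q ^ k) * efacn Q Q p k"
    using prod_ellE_divide_eq_efacn[OF p _ Q, of "Q ^ k" k] Q by (simp add: \<mu>_def)
  have high: "(\<Prod>i<n - k. ellE (Q ^ (Suc k + i) / Q ^ k) p) = efacn Q Q p (n - k)"
    unfolding efacn_def using Q by (intro prod.cong refl) (simp add: power_add)
  have "Q ^ n * Q / Q ^ k = Q * Q ^ (n - k)"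
    using Q k by (simp add: power_diff)
  hence inv: "efacn (1 / Q ^ n) Q p k = \<mu> (Q ^ n) * efacn (Q * Q ^ (n - k)) Q p k"
    using prod_ellE_divide_eq_efacn[OF p _ Q, of "Q ^ n" k] Q by (simp add: \<mu>_def efacn_def)
  have full: "efacn Q Q p (n - k) * efacn (Q * Q ^ (n - k)) Q p k = efacn Q Q p n"
    using efacn_add[of Q Q p "n - k" k] k by simp
  have "\<mu> (Q ^ k) * \<mu> (Q ^ n) * Q ^ k * Q ^ (k * n)
      = (\<Prod>j<k. Q ^ j) * (\<Prod>j<k. Q ^ j) * Q ^ k * (Q ^ n) ^ k / ((Q ^ k) ^ k * (Q ^ n) ^ k)"
    unfolding \<mu>_def prod_minus_divide using power_mult[of Q k n] power_mult[of Q n k]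
    by (simp add: field_simps flip: power_mult_distrib)
  also have "\<dots> = 1"
    unfolding prod_power_mult_self using Q by simp
  finally have mono: "\<mu> (Q ^ k) * \<mu> (Q ^ n) * Q ^ k * Q ^ (k * n) = 1" .
  have "efacn (1 / Q ^ n) Q p k * Q ^ k * (\<Prod>j\<in>{..n} - {k}. ellE (Q ^ j / Q ^ k) p) * Q ^ (k * n)
      = (\<mu> (Q ^ k) * \<mu> (Q ^ n) * Q ^ k * Q ^ (k * n)) * efacn Q Q p k
        * (efacn Q Q p (n - k) * efacn (Q * Q ^ (n - k)) Q p k)"
    unfolding prod_remove_atMost_split[OF k] low high inv by (simp add: mult_ac)
  thus ?thesis
    unfolding mono full by simp
qed

lemma prod_hole_ellE_shift:
  assumes "k \<le> n"
  shows "ellE (A * Q ^ (2 * k)) p * efacn A Q p k * (\<Prod>j\<in>{..n} - {k}. ellE (A * Q ^ (j + k)) p)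
       = ellE A p * efacn (A * Q) Q p n * efacn (A * Q ^ (n + 1)) Q p k"
proof -
  have "ellE (A * Q ^ (2 * k)) p * (\<Prod>j\<in>{..n} - {k}. ellE (A * Q ^ (j + k)) p)
      = (\<Prod>j\<le>n. ellE (A * Q ^ (j + k)) p)"
    using prod.remove[of "{..n}" k "\<lambda>j. ellE (A * Q ^ (j + k)) p"] assms by (simp add: mult_2)
  also have "\<dots> = efacn (A * Q ^ k) Q p (n + 1)"
    unfolding efacn_def by (simp add: lessThan_Suc_atMost[symmetric] power_add mult_ac)
  finally have "ellE (A * Q ^ (2 * k)) p * (\<Prod>j\<in>{..n} - {k}. ellE (A * Q ^ (j + k)) p)
      = efacn (A * Q ^ k) Q p (n + 1)" .
  moreover have "efacn A Q p k * efacn (A * Q ^ k) Q p (n + 1)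
      = ellE A p * efacn (A * Q) Q p n * efacn (A * Q ^ (n + 1)) Q p k"
    using efacn_add[of A Q p k "n + 1"] efacn_add[of A Q p "n + 1" k] efacn_Suc_left[of A Q p n]
    by (simp add: add.commute)
  ultimately show ?thesis
    by (simp add: mult_ac)
qed

lemma efacn_mult_ellE_sym:
  "efacn c Q p k * efacn (A / c) Q p k * ellE_sym p A (Q ^ k) c
     = ellE_sym p A 1 c * efacn (c * Q) Q p k * efacn (A * Q / c) Q p k"
proof -
  have "efacn c Q p k * ellE (c * Q ^ k) p = ellE c p * efacn (c * Q) Q p k"
    using efacn_Suc[of c Q p k] efacn_Suc_left[of c Q p k] by simp
  moreover have "efacn (A / c) Q p k * ellE (A / c * Q ^ k) p
      = ellE (A / c) p * efacn (A / c * Q) Q p k"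
    using efacn_Suc[of "A / c" Q p k] efacn_Suc_left[of "A / c" Q p k] by simp
  ultimately show ?thesis
    unfolding ellE_sym_def by (simp add: mult_ac)
qed

lemma ellE_power_ratio_nonzero:
  assumes p: "norm p < 1" and Q: "Q \<noteq> 0" and nz: "efacn Q Q p n \<noteq> 0"
    and "j \<le> n" "k \<le> n" "j \<noteq> k"
  shows "ellE (Q ^ j / Q ^ k) p \<noteq> 0"
proof -
  have pos: "ellE (Q ^ Suc i) p \<noteq> 0" if "i < n" for i
    using nz that by (auto simp: efacn_eq_0_iff)
  show ?thesis
  proof (cases "k < j")
    case True
    hence "j = k + Suc (j - k - 1)"
      by simp
    hence "Q ^ j = Q ^ k * Q ^ Suc (j - k - 1)"
      by (metis power_add)
    hence "Q ^ j / Q ^ k = Q ^ Suc (j - k - 1)"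
      using Q by simp
    thus ?thesis
      using pos[of "j - k - 1"] True assms by simp
  next
    case False
    hence "j < k"
      using assms by simp
    hence "k = j + Suc (k - j - 1)"
      by simp
    hence "Q ^ k = Q ^ j * Q ^ Suc (k - j - 1)"
      by (metis power_add)
    hence "Q ^ j / Q ^ k = 1 / Q ^ Suc (k - j - 1)"
      using Q by simp
    thus ?thesis
      using pos[of "k - j - 1"] ellE_inverse[OF p, of "Q ^ Suc (k - j - 1)"] \<open>j < k\<close> assms
      by (simp del: power_Suc)
  qed
qed

lemma ellE_shifted_power_nonzero:
  assumes low: "efacn (A * Q) Q p n \<noteq> 0" and high: "efacn (A * Q ^ (n + 1)) Q p n \<noteq> 0"
    and "j \<le> n" "k \<le> n" "j \<noteq> k"
  shows "ellE (A * Q ^ (j + k)) p \<noteq> 0"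
proof (cases "j + k \<le> n")
  case True
  have "j + k = Suc (j + k - 1)"
    using assms(5) by linarith
  hence eq: "A * Q ^ (j + k) = A * Q * Q ^ (j + k - 1)"
    by (metis power_Suc mult.assoc)
  have "j + k - 1 < n"
    using True assms(5) by linarith
  hence "ellE (A * Q * Q ^ (j + k - 1)) p \<noteq> 0"
    using low unfolding efacn_eq_0_iff by blast
  thus ?thesis
    unfolding eq .
next
  case False
  have "j + k = (n + 1) + (j + k - (n + 1))"
    using False by linarith
  hence eq: "A * Q ^ (j + k) = A * Q ^ (n + 1) * Q ^ (j + k - (n + 1))"
    by (metis power_add mult.assoc)
  have "j + k - (n + 1) < n"
    using False assms(3,4) by linarith
  hence "ellE (A * Q ^ (n + 1) * Q ^ (j + k - (n + 1))) p \<noteq> 0"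
    using high unfolding efacn_eq_0_iff by blast
  thus ?thesis
    unfolding eq .
qed

lemma efacn_exchange:
  "efacn x B p n * efacn (x * B ^ n) B p m = efacn x B p m * efacn (x * B ^ m) B p n"
  by (metis add.commute efacn_add)

lemma prod_ellE_sym_at_inverse:
  assumes p: "norm p < 1" and nz: "b \<noteq> 0" "q \<noteq> 0" "w \<noteq> 0"
  shows "(\<Prod>i<n. ellE_sym p (a * b) (q ^ i / b) (1 / w))
       = (\<Prod>i<n. - (q ^ i / b)) / w ^ n * efacn (b * q / q ^ n * w) q p n * efacn (a * w) q p n"
proof -
  have "(\<Prod>i<n. ellE_sym p (a * b) (q ^ i / b) (1 / w))
      = (\<Prod>i<n. ellE (q ^ i / (b * w)) p * ellE (a * w * q ^ i) p)"
    unfolding ellE_sym_def using nz by (intro prod.cong refl) (simp add: field_simps)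
  also have "\<dots> = (\<Prod>i<n. ellE (q ^ i / (b * w)) p) * efacn (a * w) q p n"
    unfolding efacn_def by (rule prod.distrib)
  also have "(\<Prod>i<n. ellE (q ^ i / (b * w)) p)
      = (\<Prod>i<n. - (q ^ i / (b * w))) * efacn (b * w * q / q ^ n) q p n"
    using nz by (intro prod_ellE_divide_eq_efacn[OF p]) auto
  also have "(\<Prod>i<n. - (q ^ i / (b * w))) = (\<Prod>i<n. - (q ^ i / b)) / w ^ n"
    unfolding prod_minus_divide by (simp add: power_mult_distrib)
  also have "b * w * q / q ^ n = b * q / q ^ n * w"
    by simp
  finally show ?thesis .
qed

lemma efacn_prod_ellE_sym_inverse_power:
  assumes p: "norm p < 1" and nz: "a \<noteq> 0" "b \<noteq> 0" "q \<noteq> 0"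
  shows "efacn (b * q) q p (r * k) * efacn (a * q ^ n) q p (r * k)
         * efacn a q p n * efacn (1 / b) q p n
       = (q ^ r) ^ (k * n) * (\<Prod>i<n. ellE_sym p (a * b) (q ^ i / b) (1 / (q ^ r) ^ k))
         * efacn a q p (r * k) * efacn (b * q / q ^ n) q p (r * k)"
proof -
  define w where "w = (q ^ r) ^ k"
  define B where "B = b * q / q ^ n"
  define \<mu> where "\<mu> = (\<Prod>i<n. - (q ^ i / b))"
  have w: "w \<noteq> 0" "q ^ (r * k) = w" "(q ^ r) ^ (k * n) = w ^ n"
    using nz by (simp_all add: w_def flip: power_mult) (simp_all add: ac_simps)
  have "efacn (1 / b) q p n = \<mu> * efacn B q p n"
    using prod_ellE_divide_eq_efacn[OF p nz(2,3), of n] by (simp add: \<mu>_def B_def efacn_def)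
  hence "efacn (b * q) q p (r * k) * efacn (a * q ^ n) q p (r * k)
        * efacn a q p n * efacn (1 / b) q p n
      = \<mu> * (efacn a q p n * efacn (a * q ^ n) q p (r * k))
        * (efacn B q p n * efacn (B * q ^ n) q p (r * k))"
    using nz by (simp add: B_def mult_ac)
  also have "\<dots> = \<mu> * (efacn a q p (r * k) * efacn (a * w) q p n)
      * (efacn B q p (r * k) * efacn (B * w) q p n)"
    using efacn_exchange[of a q p n "r * k"] efacn_exchange[of B q p n "r * k"] w(2) by simp
  also have "\<dots> = w ^ n * (\<mu> / w ^ n * efacn (B * w) q p n * efacn (a * w) q p n)
      * efacn a q p (r * k) * efacn B q p (r * k)"
    using w by (simp add: field_simps)
  also have "\<mu> / w ^ n * efacn (B * w) q p n * efacn (a * w) q p n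
      = (\<Prod>i<n. ellE_sym p (a * b) (q ^ i / b) (1 / w))"
    unfolding prod_ellE_sym_at_inverse[OF p nz(2,3) w(1)] \<mu>_def B_def ..
  finally show ?thesis
    unfolding w(3) B_def w_def .
qed

lemma prod_ellE_sym_powers_remove_0:
  "(\<Prod>j\<in>{..n} - {0}. ellE_sym p A (Q ^ j) c) = efacn (c * Q) Q p n * efacn (A * Q / c) Q p n"
  unfolding prod_remove_atMost_split[OF le0] efacn_def ellE_sym_def
  by (simp add: prod.distrib mult_ac)

lemma efacn_ratio_eq_prod_ellE_sym_ratio:
  assumes hcQ: "efacn (c * Q) Q p n \<noteq> 0" and hAQc: "efacn (A * Q / c) Q p n \<noteq> 0" and k: "k \<le> n"
  shows "efacn c Q p k * efacn (A / c) Q p k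
       = (\<Prod>j\<in>{..n} - {k}. ellE_sym p A (Q ^ j) c) / (\<Prod>j\<in>{..n} - {0}. ellE_sym p A (Q ^ j) c)
         * (efacn (A * Q / c) Q p k * efacn (c * Q) Q p k)"
proof -
  define g where "g j = ellE_sym p A (Q ^ j) c" for j
  define R where "R = (\<Prod>j\<in>{..n} - {k}. g j) / (\<Prod>j\<in>{..n} - {0}. g j)"
  have g0: "(\<Prod>j\<in>{..n} - {0}. g j) \<noteq> 0"
    using hcQ hAQc unfolding g_def prod_ellE_sym_powers_remove_0 by simp
  have "efacn c Q p k * efacn (A / c) Q p k = R * (efacn (A * Q / c) Q p k * efacn (c * Q) Q p k)"
  proof (cases k)
    case 0
    thus ?thesis
      using g0 by (simp add: R_def)
  next
    case (Suc j)
    have "j < n"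
      using Suc k by simp
    hence "ellE (c * Q * Q ^ j) p \<noteq> 0" "ellE (A * Q / c * Q ^ j) p \<noteq> 0"
      using hcQ hAQc unfolding efacn_eq_0_iff by blast+
    moreover have "g k = ellE (c * Q * Q ^ j) p * ellE (A * Q / c * Q ^ j) p"
      unfolding g_def ellE_sym_def Suc by (simp add: mult_ac)
    ultimately have "g k \<noteq> 0"
      by simp
    moreover have "g k * (\<Prod>j\<in>{..n} - {k}. g j) = g 0 * (\<Prod>j\<in>{..n} - {0}. g j)"
      using prod.remove[of "{..n}" k g] prod.remove[of "{..n}" 0 g] k by simp
    ultimately have "R * g k = g 0"
      using g0 unfolding R_def by (simp add: field_simps)
    have "efacn c Q p k * efacn (A / c) Q p k * g k
        = g 0 * efacn (c * Q) Q p k * efacn (A * Q / c) Q p k"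
      using efacn_mult_ellE_sym[of c Q p k A] by (simp add: g_def)
    also have "\<dots> = R * (efacn (A * Q / c) Q p k * efacn (c * Q) Q p k) * g k"
      unfolding \<open>R * g k = g 0\<close>[symmetric] by (simp add: mult_ac)
    finally show ?thesis
      using \<open>g k \<noteq> 0\<close> by simp
  qed
  thus ?thesis
    unfolding R_def g_def by (simp add: mult_ac)
qed

lemma wp_term_rearrangement:
  fixes eA eA2 A_k A_n A_nk c_k Ac_k cQ_k AcQ_k bq_rk aq_rk a_rk bq'_rk a_n b_n
    Qinv_k Q_k Q_n Qkn Qk DQ DA f R :: "'a :: field"
  assumes Q_part: "Qinv_k * Qk * DQ * Qkn = Q_k * Q_n"
    and A_part: "eA2 * A_k * DA = eA * A_n * A_nk"
    and ab_part: "bq_rk * aq_rk * a_n * b_n = Qkn * f * a_rk * bq'_rk"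
    and c_part: "c_k * Ac_k = R * (AcQ_k * cQ_k)"
    and nonzero: "eA \<noteq> 0" "Q_k \<noteq> 0" "AcQ_k \<noteq> 0" "cQ_k \<noteq> 0" "a_rk \<noteq> 0" "bq'_rk \<noteq> 0" "A_nk \<noteq> 0"
       "a_n \<noteq> 0" "b_n \<noteq> 0" "DQ \<noteq> 0" "DA \<noteq> 0" "Qkn \<noteq> 0"
  shows "eA2 / eA * (A_k * (c_k * Ac_k * bq_rk * aq_rk * Qinv_k) * Qk)
           / (Q_k * (AcQ_k * cQ_k * a_rk * bq'_rk * A_nk))
       = Q_n * A_n / (a_n * b_n) * (f / (DQ * DA)) * R"
proof -
  have "eA2 / eA * (A_k * (c_k * Ac_k * bq_rk * aq_rk * Qinv_k) * Qk)
          / (Q_k * (AcQ_k * cQ_k * a_rk * bq'_rk * A_nk))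
      = (eA2 * A_k * DA) * (Qinv_k * Qk * DQ * Qkn) * (bq_rk * aq_rk * a_n * b_n) * (c_k * Ac_k)
        / (eA * Q_k * AcQ_k * cQ_k * a_rk * bq'_rk * A_nk * DA * DQ * Qkn * a_n * b_n)"
    using nonzero by (simp add: field_simps)
  also have "\<dots> = (eA * A_n * A_nk) * (Q_k * Q_n) * (Qkn * f * a_rk * bq'_rk) * (R * (AcQ_k * cQ_k))
        / (eA * Q_k * AcQ_k * cQ_k * a_rk * bq'_rk * A_nk * DA * DQ * Qkn * a_n * b_n)"
    unfolding Q_part A_part ab_part c_part ..
  also have "\<dots> = Q_n * A_n / (a_n * b_n) * (f / (DQ * DA)) * R"
    using nonzero by (simp add: field_simps)
  finally show ?thesis .
qed

lemma wp_term_eq_lagrange_summand: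
  fixes a b c q p :: complex and r n k :: nat
  defines "A \<equiv> a * b" and "Q \<equiv> q ^ r"
  assumes p: "norm p < 1" and nz: "q \<noteq> 0" "a \<noteq> 0" "b \<noteq> 0" "c \<noteq> 0" and k: "k \<le> n"
    and hA: "ellE A p \<noteq> 0" and hQ: "efacn Q Q p n \<noteq> 0"
    and hcQ: "efacn (c * Q) Q p n \<noteq> 0" and hAQc: "efacn (A * Q / c) Q p n \<noteq> 0"
    and hAQ: "efacn (A * Q) Q p n \<noteq> 0" and hAQn: "efacn (A * Q ^ (n + 1)) Q p n \<noteq> 0"
    and ha: "efacn a q p n \<noteq> 0" and hb: "efacn (1 / b) q p n \<noteq> 0"
    and har: "efacn a q p (r * n) \<noteq> 0" and hbr: "efacn (b * q / q ^ n) q p (r * n) \<noteq> 0"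
  shows "wp_term a b c q p r n k
       = efacn Q Q p n * efacn (A * Q) Q p n / (efacn a q p n * efacn (1 / b) q p n)
         * ((\<Prod>i<n. ellE_sym p A (q ^ i / b) (1 / Q ^ k))
            / (\<Prod>j\<in>{..n} - {k}. ellE_sym p A (Q ^ j) (1 / Q ^ k)))
         * ((\<Prod>j\<in>{..n} - {k}. ellE_sym p A (Q ^ j) c) / (\<Prod>j\<in>{..n} - {0}. ellE_sym p A (Q ^ j) c))"
proof -
  have Q0: "Q \<noteq> 0"
    using nz by (simp add: Q_def)
  define g where "g j = ellE_sym p A (Q ^ j) c" for j
  define DQ where "DQ = (\<Prod>j\<in>{..n} - {k}. ellE (Q ^ j / Q ^ k) p)"
  define DA where "DA = (\<Prod>j\<in>{..n} - {k}. ellE (A * Q ^ (j + k)) p)"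
  define R where "R = (\<Prod>j\<in>{..n} - {k}. g j) / (\<Prod>j\<in>{..n} - {0}. g j)"
  have nodes: "(\<Prod>j\<in>{..n} - {k}. ellE_sym p A (Q ^ j) (1 / Q ^ k)) = DQ * DA"
    unfolding DQ_def DA_def ellE_sym_def using Q0 by (simp add: power_add mult_ac prod.distrib)
  have DQ: "DQ \<noteq> 0"
    unfolding DQ_def using ellE_power_ratio_nonzero[OF p Q0 hQ _ k] by auto
  have DA: "DA \<noteq> 0"
    unfolding DA_def using ellE_shifted_power_nonzero[OF hAQ hAQn _ k] by auto
  have c_part:
    "efacn c Q p k * efacn (A / c) Q p k = R * (efacn (A * Q / c) Q p k * efacn (c * Q) Q p k)"
    unfolding R_def g_def by (rule efacn_ratio_eq_prod_ellE_sym_ratio[OF hcQ hAQc k])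
  have "wp_term a b c q p r n k
      = efacn Q Q p n * efacn (A * Q) Q p n / (efacn a q p n * efacn (1 / b) q p n)
      * ((\<Prod>i<n. ellE_sym p A (q ^ i / b) (1 / Q ^ k)) / (DQ * DA)) * R"
    unfolding wp_term_def A_def[symmetric] Q_def[symmetric]
  proof (rule wp_term_rearrangement)
    show "efacn (1 / Q ^ n) Q p k * Q ^ k * DQ * Q ^ (k * n) = efacn Q Q p k * efacn Q Q p n"
      unfolding DQ_def by (rule prod_hole_ellE_power_ratio[OF p Q0 k])
    show "ellE (A * Q ^ (2 * k)) p * efacn A Q p k * DA
        = ellE A p * efacn (A * Q) Q p n * efacn (A * Q ^ (n + 1)) Q p k"
      unfolding DA_def by (rule prod_hole_ellE_shift[OF k])
    show "efacn (b * q) q p (r * k) * efacn (a * q ^ n) q p (r * k)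
          * efacn a q p n * efacn (1 / b) q p n
        = Q ^ (k * n) * (\<Prod>i<n. ellE_sym p A (q ^ i / b) (1 / Q ^ k)) * efacn a q p (r * k)
          * efacn (b * q / q ^ n) q p (r * k)"
      unfolding A_def Q_def by (rule efacn_prod_ellE_sym_inverse_power[OF p nz(2,3,1)])
  qed (use c_part efacn_nonzero_le k hA hQ hcQ hAQc hAQn ha hb har hbr DQ DA Q0 in auto)
  thus ?thesis
    unfolding nodes R_def g_def .
qed

definition wp_closed_form :: "complex \<Rightarrow> complex \<Rightarrow> complex \<Rightarrow> complex \<Rightarrow> complex \<Rightarrow> nat \<Rightarrow> nat \<Rightarrow> complex"
  where
  "wp_closed_form a b c q p r n =
     efacn (a / c) q p n * efacn (c / b) q p n
       * efacn (q ^ r) (q ^ r) p n * efacn (a * b * q ^ r) (q ^ r) p n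
     / (efacn (c * q ^ r) (q ^ r) p n * efacn (a * b * q ^ r / c) (q ^ r) p n
        * efacn a q p n * efacn (1 / b) q p n)"

theorem wp_sum_eq_closed_form_generic:
  fixes a b c q p :: complex and r n :: nat
  defines "A \<equiv> a * b" and "Q \<equiv> q ^ r"
  assumes p: "norm p < 1" and nz: "q \<noteq> 0" "a \<noteq> 0" "b \<noteq> 0" "c \<noteq> 0"
    and hA: "ellE A p \<noteq> 0" and hQ: "efacn Q Q p n \<noteq> 0"
    and hcQ: "efacn (c * Q) Q p n \<noteq> 0" and hAQc: "efacn (A * Q / c) Q p n \<noteq> 0"
    and hAQ: "efacn (A * Q) Q p n \<noteq> 0" and hAQn: "efacn (A * Q ^ (n + 1)) Q p n \<noteq> 0"
    and ha: "efacn a q p n \<noteq> 0" and hb: "efacn (1 / b) q p n \<noteq> 0"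
    and har: "efacn a q p (r * n) \<noteq> 0" and hbr: "efacn (b * q / q ^ n) q p (r * n) \<noteq> 0"
  shows "(\<Sum>k\<le>n. wp_term a b c q p r n k) = wp_closed_form a b c q p r n"
proof -
  have Q0: "Q \<noteq> 0"
    using nz by (simp add: Q_def)
  define g where "g j = ellE_sym p A (Q ^ j) c" for j
  define f where "f w = (\<Prod>i<n. ellE_sym p A (q ^ i / b) w)" for w
  define C where "C k = f (1 / Q ^ k) / (\<Prod>j\<in>{..n} - {k}. ellE_sym p A (Q ^ j) (1 / Q ^ k))" for k
  define K where "K = efacn Q Q p n * efacn (A * Q) Q p n / (efacn a q p n * efacn (1 / b) q p n)"
  have "ellE_sym p A (Q ^ j) (1 / Q ^ k) \<noteq> 0" if "j \<le> n" "k \<le> n" "j \<noteq> k" for j k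
    using ellE_power_ratio_nonzero[OF p Q0 hQ that] ellE_shifted_power_nonzero[OF hAQ hAQn that] Q0
    by (simp add: ellE_sym_def power_add mult_ac)
  hence "f c = (\<Sum>k\<le>n. C k * (\<Prod>j\<in>{..n} - {k}. g j))"
    unfolding f_def C_def g_def using nz Q0 A_def
    by (intro ellE_sym_interpolation[OF p]) auto
  moreover have "f c = efacn (c / b) q p n * efacn (a / c) q p n"
    unfolding f_def ellE_sym_def efacn_def A_def using nz
    by (simp add: prod.distrib field_simps)
  moreover have "(\<Prod>j\<in>{..n} - {0}. g j) = efacn (c * Q) Q p n * efacn (A * Q / c) Q p n"
    unfolding g_def by (rule prod_ellE_sym_powers_remove_0)
  moreover have "(\<Sum>k\<le>n. wp_term a b c q p r n k)
      = (\<Sum>k\<le>n. K * C k * ((\<Prod>j\<in>{..n} - {k}. g j) / (\<Prod>j\<in>{..n} - {0}. g j)))"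
    unfolding K_def C_def f_def g_def A_def Q_def
    by (intro sum.cong refl wp_term_eq_lagrange_summand[OF p nz])
       (use hA hQ hcQ hAQc hAQ hAQn ha hb har hbr in \<open>simp_all add: A_def Q_def\<close>)
  ultimately show ?thesis
    using hcQ hAQc unfolding K_def wp_closed_form_def A_def Q_def
    by (simp add: sum_distrib_left sum_divide_distrib[symmetric] field_simps)
qed

lemma isCont_wp_term:
  assumes p: "norm p < 1" and nz: "q \<noteq> 0" "a \<noteq> 0" "b \<noteq> 0" "c \<noteq> 0" and "ellE (a * b) p \<noteq> 0"
    and "efacn (q ^ r) (q ^ r) p k * (efacn (a * b * q ^ r / c) (q ^ r) p k
           * efacn (c * q ^ r) (q ^ r) p k * efacn a q p (r * k) * efacn (b * q / q ^ n) q p (r * k)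
           * efacn (a * b * (q ^ r) ^ (n + 1)) (q ^ r) p k) \<noteq> 0"
  shows "isCont (\<lambda>z. wp_term z b c q p r n k) a"
  unfolding wp_term_def using assms by (intro continuous_intros) auto

lemma isCont_wp_closed_form:
  assumes p: "norm p < 1" and nz: "q \<noteq> 0" "a \<noteq> 0" "b \<noteq> 0" "c \<noteq> 0"
    and "efacn (c * q ^ r) (q ^ r) p n * efacn (a * b * q ^ r / c) (q ^ r) p n
           * efacn a q p n * efacn (1 / b) q p n \<noteq> 0"
  shows "isCont (\<lambda>z. wp_closed_form z b c q p r n) a"
  unfolding wp_closed_form_def using assms by (intro continuous_intros) auto

text \<open>The generic case needs \<open>efacn (a * b * q ^ r) (q ^ r) p n \<noteq> 0\<close> to separate the
  interpolation nodes; that condition holds for all \<open>z\<close> near \<open>a\<close> in place of \<open>a\<close>.\<close>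

lemma eventually_wp_sum_eq_closed_form:
  fixes a b c q p :: complex and r n :: nat
  assumes p: "norm p < 1" and nz: "q \<noteq> 0" "a \<noteq> 0" "b \<noteq> 0" "c \<noteq> 0"
    and hA: "ellE (a * b) p \<noteq> 0" and hQ: "efacn (q ^ r) (q ^ r) p n \<noteq> 0"
    and hcQ: "efacn (c * q ^ r) (q ^ r) p n \<noteq> 0"
    and hAQc: "efacn (a * b * q ^ r / c) (q ^ r) p n \<noteq> 0"
    and hAQn: "efacn (a * b * (q ^ r) ^ (n + 1)) (q ^ r) p n \<noteq> 0"
    and ha: "efacn a q p n \<noteq> 0" and hb: "efacn (1 / b) q p n \<noteq> 0"
    and har: "efacn a q p (r * n) \<noteq> 0" and hbr: "efacn (b * q / q ^ n) q p (r * n) \<noteq> 0"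
  shows "\<forall>\<^sub>F z in at a. (\<Sum>k\<le>n. wp_term z b c q p r n k) = wp_closed_form z b c q p r n"
proof -
  have Q0: "q ^ r \<noteq> 0"
    using nz by simp
  have near: "\<forall>\<^sub>F z in at a. f z \<noteq> 0" if "isCont f a" "f a \<noteq> 0" for f :: "complex \<Rightarrow> complex"
    using tendsto_imp_eventually_ne[OF isContD[OF that(1)] that(2)] .
  have "\<forall>\<^sub>F z in at a. z \<noteq> 0"
    by (rule eventually_neq_at_within)
  moreover have "\<forall>\<^sub>F z in at a. ellE (z * b) p \<noteq> 0"
    by (rule near, intro continuous_intros) (use p nz hA in auto)
  moreover have "\<forall>\<^sub>F z in at a. efacn (z * b * q ^ r / c) (q ^ r) p n \<noteq> 0"
    by (rule near, intro continuous_intros) (use p nz Q0 hAQc in auto)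
  moreover have "\<forall>\<^sub>F z in at a. efacn (z * b * (q ^ r) ^ (n + 1)) (q ^ r) p n \<noteq> 0"
    by (rule near, intro continuous_intros) (use p nz Q0 hAQn in auto)
  moreover have "\<forall>\<^sub>F z in at a. efacn z q p n \<noteq> 0"
    by (rule near, intro continuous_intros) (use p nz ha in auto)
  moreover have "\<forall>\<^sub>F z in at a. efacn z q p (r * n) \<noteq> 0"
    by (rule near, intro continuous_intros) (use p nz har in auto)
  moreover have "\<forall>\<^sub>F z in at a. efacn (z * (b * q ^ r)) (q ^ r) p n \<noteq> 0"
    by (rule eventually_efacn_nonzero) (use p nz in auto)
  ultimately show ?thesis
  proof eventually_elim
    case (elim z)
    thus ?case
      by (intro wp_sum_eq_closed_form_generic[OF p nz(1) _ nz(3,4)])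
         (use hQ hcQ hbr hb in \<open>simp_all add: mult.assoc\<close>)
  qed
qed

theorem wp_sum_eq_closed_form:
  fixes a b c q p :: complex and r n :: nat
  assumes p: "norm p < 1" and nz: "q \<noteq> 0" "a \<noteq> 0" "b \<noteq> 0" "c \<noteq> 0"
    and hA: "ellE (a * b) p \<noteq> 0" and hQ: "efacn (q ^ r) (q ^ r) p n \<noteq> 0"
    and hcQ: "efacn (c * q ^ r) (q ^ r) p n \<noteq> 0"
    and hAQc: "efacn (a * b * q ^ r / c) (q ^ r) p n \<noteq> 0"
    and hAQn: "efacn (a * b * (q ^ r) ^ (n + 1)) (q ^ r) p n \<noteq> 0"
    and ha: "efacn a q p n \<noteq> 0" and hb: "efacn (1 / b) q p n \<noteq> 0"
    and har: "efacn a q p (r * n) \<noteq> 0" and hbr: "efacn (b * q / q ^ n) q p (r * n) \<noteq> 0"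
  shows "(\<Sum>k\<le>n. wp_term a b c q p r n k) = wp_closed_form a b c q p r n"
proof (rule isCont_eventually_eq_imp_eq[where f = "\<lambda>z. \<Sum>k\<le>n. wp_term z b c q p r n k"
                                         and g = "\<lambda>z. wp_closed_form z b c q p r n"])
  show "\<forall>\<^sub>F z in at a. (\<Sum>k\<le>n. wp_term z b c q p r n k) = wp_closed_form z b c q p r n"
    by (rule eventually_wp_sum_eq_closed_form[OF assms])
  have "efacn (q ^ r) (q ^ r) p k * (efacn (a * b * q ^ r / c) (q ^ r) p k
           * efacn (c * q ^ r) (q ^ r) p k * efacn a q p (r * k) * efacn (b * q / q ^ n) q p (r * k)
           * efacn (a * b * (q ^ r) ^ (n + 1)) (q ^ r) p k) \<noteq> 0" if "k \<le> n" for k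
    using efacn_nonzero_le[OF hQ that] efacn_nonzero_le[OF hAQc that] efacn_nonzero_le[OF hcQ that]
      efacn_nonzero_le[OF har] efacn_nonzero_le[OF hbr] efacn_nonzero_le[OF hAQn that] that
    by simp
  thus "isCont (\<lambda>z. \<Sum>k\<le>n. wp_term z b c q p r n k) a"
    by (intro continuous_intros isCont_wp_term[OF p nz hA]) simp
  show "isCont (\<lambda>z. wp_closed_form z b c q p r n) a"
    by (rule isCont_wp_closed_form[OF p nz]) (use hcQ hAQc ha hb in simp)
qed

theorem theorem4p1:
  fixes a b c q p :: complex and r n :: nat
  defines "params \<equiv> [c, a * b / c] @ map (\<lambda>i. b * q ^ i) [1..<r + 1]
                     @ map (\<lambda>i. a * q ^ (n + i)) [0..<r] @ [q powi (- int (r * n))]"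
  assumes "r \<ge> 1"
    and "norm p < 1" and "q \<noteq> 0" and "a \<noteq> 0" and "b \<noteq> 0" and "c \<noteq> 0"
    and "ellE (a * b) p \<noteq> 0"
    and "\<And>k. efac (q ^ r) (q ^ r) p (int k) \<noteq> 0"
    and "\<And>k x. x \<in> set params \<Longrightarrow> efac (a * b * q ^ r / x) (q ^ r) p (int k) \<noteq> 0"
    and "efac (c * q ^ r) (q ^ r) p (int n) \<noteq> 0"
    and "efac (a * b * q ^ r / c) (q ^ r) p (int n) \<noteq> 0"
    and "efac a q p (int n) \<noteq> 0"
    and "efac (1 / b) q p (int n) \<noteq> 0"
  shows "omega (a * b) params (q ^ r) p =
     efac (a / c) q p (int n) * efac (c / b) q p (int n)
       * efac (q ^ r) (q ^ r) p (int n) * efac (a * b * q ^ r) (q ^ r) p (int n)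
     / (efac (c * q ^ r) (q ^ r) p (int n) * efac (a * b * q ^ r / c) (q ^ r) p (int n)
        * efac a q p (int n) * efac (1 / b) q p (int n))"
proof -
  note nz = assms(4-7)
  have params: "params = wp_params a b c q r n"
    unfolding params_def wp_params_def ..
  have "(\<Prod>x\<leftarrow>wp_params a b c q r n. efac (a * b * q ^ r / x) (q ^ r) p (int n)) \<noteq> 0"
    using assms(10) unfolding params by (auto simp: prod_list_zero_iff)
  hence "efacn a q p (r * n) \<noteq> 0" "efacn (b * q / q ^ n) q p (r * n) \<noteq> 0"
    and "efacn (a * b * (q ^ r) ^ (n + 1)) (q ^ r) p n \<noteq> 0"
    unfolding prod_wp_params_efac_dual[OF nz] by auto
  thus ?thesis
    unfolding params omega_wp_params[OF assms(3) nz] efac_of_nat wp_closed_form_def[symmetric]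
    by (intro wp_sum_eq_closed_form[OF assms(3) nz assms(8)])
       (use assms(9,11-14) in \<open>simp_all add: efac_of_nat\<close>)
qed

end
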